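(* Assume an i.i.d. sample of $(Y,X)$ of size $n$ from the Gaussian functional linear model, and let $[\ell]_j^2=j^{-2s}$ for all $j\ge1$. Then the order of $\mathcal R^\ell_*[(1+\log n)n^{-1}]$ is as follows. (pp) If $\beta_j=j^{2p}$, $\gamma_j=j^{-2a}$ with $p>0$, $a>1/2$, $p+a\ge3/2$ and $s>1/2-p$, then $\mathcal R^\ell_*[(1+\log n)n^{-1}]\asymp (n^{-1}\log n)^{(2p+2s-1)/(2p+2a)}$ if $s-a<1/2$; $\asymp n^{-1}(\log n)^2$ if $s-a=1/2$; $\asymp n^{-1}\log n$ if $s-a>1/2$. (pe) If $\beta_j=j^{2p}$, $\gamma_j=\exp(-j^{2a}+1)$ with $p>0$, $a>0$ and $s>1/2-p$, then $\mathcal R^\ell_*[(1+\log n)n^{-1}]\asymp(\log n)^{-(2p+2s-1)/(2a)}$. (ep) If $\beta_j=\exp(j^{2p}-1)$, $\gamma_j=j^{-2a}$ with $p>0$, $a>1/2$ and $s\in\mathbb R$, then $\mathcal R^\ell_*[(1+\log n)n^{-1}]\asymp n^{-1}(\log n)^{(2p+2a-2s+1)/(2p)}$ if $s-a<1/2$; $\asymp n^{-1}(\log n)(\log\log n)$ if $s-a=1/2$; $\asymp n^{-1}\log n$ if $s-a>1/2$.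
   Context: For strictly positive sequences $\beta,\gamma$ and real numbers $[\ell]_j$, $j\ge1$, define for $m\ge1$ and $x\in(0,1]$ $$\mathcal R^\ell_m[x]:=\max\Big\{\sum_{j>m}\frac{[\ell]_j^2}{\beta_j},\ \max\Big(\frac{\gamma_m}{\beta_m},x\Big)\sum_{j=1}^m\frac{[\ell]_j^2}{\gamma_j}\Big\},\qquad\mathcal R^\ell_*[x]:=\min_{m\ge1}\mathcal R^\ell_m[x].$$ (In the paper $\beta$ describes the ellipsoid $\{h:\sum_j\beta_j\langle h,\psi_j\rangle^2\le r\}$ of slope functions, $\gamma$ the decay of the covariance operator, and $[\ell]_j=\ell(\psi_j)$ the coefficients of the linear functional.) For positive sequences, $x_n\asymp y_n$ means $x_n/y_n$ is bounded away from zero and infinity. *)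

theory Defs
  imports "HOL-Analysis.Analysis" "HOL-Library.Landau_Symbols"
begin

text \<open>Sequences are indexed from 1; the value at index 0 is irrelevant.
  R_m[x] = max (sum_{j>m} l_j^2/beta_j) (max(gamma_m/beta_m, x) * sum_{j=1}^m l_j^2/gamma_j).\<close>

definition Rm :: "(nat \<Rightarrow> real) \<Rightarrow> (nat \<Rightarrow> real) \<Rightarrow> (nat \<Rightarrow> real) \<Rightarrow> nat \<Rightarrow> real \<Rightarrow> real" where
  "Rm \<beta> \<gamma> l m x =
     max (\<Sum>\<^sub>\<infinity>j\<in>{m<..}. (l j)\<^sup>2 / \<beta> j)
         (max (\<gamma> m / \<beta> m) x * (\<Sum>j=1..m. (l j)\<^sup>2 / \<gamma> j))"

definition Rstar :: "(nat \<Rightarrow> real) \<Rightarrow> (nat \<Rightarrow> real) \<Rightarrow> (nat \<Rightarrow> real) \<Rightarrow> real \<Rightarrow> real" where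
  "Rstar \<beta> \<gamma> l x = (INF m\<in>{1..}. Rm \<beta> \<gamma> l m x)"

end

theory Submission
  imports Defs "HOL-Real_Asymp.Real_Asymp"
begin

text \<open>\<open>R\<^sub>m[x]\<close> balances the tail \<open>\<Sum>\<^sub>j\<^sub>>\<^sub>m [\<ell>]\<^sub>j\<^sup>2/\<beta>\<^sub>j\<close>, which decreases in \<open>m\<close>, against
  \<open>x \<Sum>\<^sub>j\<^sub>\<le>\<^sub>m [\<ell>]\<^sub>j\<^sup>2/\<gamma>\<^sub>j\<close>, which increases in \<open>m\<close> (the factor \<open>\<gamma>\<^sub>m/\<beta>\<^sub>m\<close> is at most \<open>x\<close> near the
  balancing index, or is itself of the order of the answer). Comparing sums of powers with integrals
  gives both sums up to constants, uniformly in \<open>m\<close>. Evaluating \<open>R\<^sub>m[x]\<close> at the balancing index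
  bounds \<open>R\<^sub>*[x]\<close> from above; splitting every \<open>m\<close> into "below" (the tail is large) and "above"
  (the sum is large) bounds it from below. This determines \<open>R\<^sub>*[x]\<close> up to constants as \<open>x \<rightarrow> 0+\<close>;
  since \<open>(1 + log n)/n \<rightarrow> 0+\<close>, composing with this level and simplifying the resulting functions
  of \<open>n\<close> gives the stated rates.\<close>

lemma powr_le_const_mul_exp_powr:
  fixes k \<alpha> \<theta> :: real
  assumes "0 < \<alpha>" "0 < \<theta>"
  shows "\<exists>K>0. \<forall>u\<ge>1. u powr k \<le> K * exp (\<theta> * u powr \<alpha>)"
proof (cases "k \<le> 0")
  case True
  have "u powr k \<le> 1 * exp (\<theta> * u powr \<alpha>)" if "1 \<le> u" for u
  proof -
    have "u powr k \<le> u powr 0" using that True by (intro powr_mono) auto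
    also have "\<dots> \<le> exp (\<theta> * u powr \<alpha>)" using that assms by simp
    finally show ?thesis by simp
  qed
  then show ?thesis by (intro exI[of _ 1]) auto
next
  case False
  define \<kappa> where "\<kappa> = k / \<alpha>"
  have \<kappa>: "\<kappa> > 0" using False assms by (simp add: \<kappa>_def)
  have "\<theta> powr \<kappa> * u powr k \<le> \<kappa> powr \<kappa> * exp (\<theta> * u powr \<alpha>)" if "1 \<le> u" for u
  proof -
    define v where "v = \<theta> * u powr \<alpha>"
    have v: "0 \<le> v" using assms by (simp add: v_def)
    have "v / \<kappa> \<le> exp (v / \<kappa>)" using exp_ge_add_one_self[of "v / \<kappa>"] by linarith
    then have "(v / \<kappa>) powr \<kappa> \<le> exp (v / \<kappa>) powr \<kappa>" using v \<kappa> by (intro powr_mono2) auto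
    also have "\<dots> = exp v" using \<kappa> by (simp add: powr_def)
    finally have "v powr \<kappa> \<le> \<kappa> powr \<kappa> * exp v" using v \<kappa> by (simp add: powr_divide divide_le_eq mult.commute)
    moreover have "v powr \<kappa> = \<theta> powr \<kappa> * u powr k"
      using assms that by (simp add: v_def powr_mult powr_powr \<kappa>_def)
    ultimately show ?thesis by (simp add: v_def)
  qed
  then show ?thesis using \<kappa> assms
    by (intro exI[of _ "\<kappa> powr \<kappa> / \<theta> powr \<kappa>"]) (auto simp: field_simps)
qed

lemma powr_mul_exp_powr_quasi_mono:
  fixes k \<alpha> :: real
  assumes "0 < \<alpha>"
  obtains K where "0 < K"
    and "\<And>j m. 1 \<le> j \<Longrightarrow> j \<le> m \<Longrightarrow>
           real j powr k * exp (real j powr \<alpha>) \<le> K * (real m powr k * exp (real m powr \<alpha>))"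
proof -
  obtain K0 where K0: "0 < K0" "\<And>u. 1 \<le> u \<Longrightarrow> u powr (-k) \<le> K0 * exp (1 * u powr \<alpha>)"
    using powr_le_const_mul_exp_powr[OF assms zero_less_one, of "-k"] by auto
  have "real j powr k * exp (real j powr \<alpha>) \<le> K0 * exp 1 * (real m powr k * exp (real m powr \<alpha>))"
    if jm: "1 \<le> j" "j \<le> m" for j m :: nat
  proof -
    define u where "u = real m / real j"
    have u: "1 \<le> u" and j: "0 < real j" and m: "real m = u * real j" using jm by (auto simp: u_def)
    have m_\<alpha>: "real m powr \<alpha> = u powr \<alpha> * real j powr \<alpha>" using u j by (simp add: m powr_mult)
    have "1 \<le> real j powr \<alpha>" "1 \<le> u powr \<alpha>" using jm u assms by (auto intro: ge_one_powr_ge_zero)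
    then have "0 \<le> (u powr \<alpha> - 1) * (real j powr \<alpha> - 1)" by simp
    then have "u powr \<alpha> \<le> 1 + (real m powr \<alpha> - real j powr \<alpha>)" unfolding m_\<alpha> by (simp add: algebra_simps)
    then have "u powr (-k) \<le> K0 * exp (1 + (real m powr \<alpha> - real j powr \<alpha>))"
      using K0(2)[OF u] K0(1) by (smt (verit, best) exp_le_cancel_iff mult_left_mono)
    then have "u powr (-k) * exp (real j powr \<alpha>) \<le> K0 * exp 1 * exp (real m powr \<alpha>)"
      by (simp add: exp_add exp_diff field_simps)
    then have "real m powr k * (u powr (-k) * exp (real j powr \<alpha>))
        \<le> real m powr k * (K0 * exp 1 * exp (real m powr \<alpha>))"
      by (intro mult_left_mono) auto
    moreover have "real j powr k = u powr (-k) * real m powr k"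
      using u j by (simp add: m powr_mult powr_minus field_simps)
    ultimately show ?thesis by (simp add: mult_ac)
  qed
  then show ?thesis using K0(1) by (intro that[of "K0 * exp 1"]) auto
qed

lemma mul_exp_powr_le_powr:
  fixes \<alpha> q :: real
  assumes "0 < \<alpha>"
  obtains K where "0 < K"
    and "\<And>x m. 0 < x \<Longrightarrow> 1 \<le> m \<Longrightarrow> real m powr \<alpha> \<le> - ln x / 2 \<Longrightarrow>
           x * exp (real m powr \<alpha>) \<le> K * real m powr (-q)"
proof -
  obtain K where K: "0 < K" "\<And>u. 1 \<le> u \<Longrightarrow> u powr q \<le> K * exp (1 * u powr \<alpha>)"
    using powr_le_const_mul_exp_powr[OF assms zero_less_one, of q] by auto
  have "x * exp (real m powr \<alpha>) \<le> K * real m powr (-q)"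
    if x: "0 < x" and m: "1 \<le> m" and m_L: "real m powr \<alpha> \<le> - ln x / 2" for x m
  proof -
    define L P where "L = - ln x" and "P = real m powr q"
    have "x * exp (real m powr \<alpha>) = exp (real m powr \<alpha> - L)" using x by (simp add: L_def exp_add)
    also have "\<dots> \<le> exp (- (L / 2))" using m_L by (simp add: L_def)
    also have "\<dots> \<le> K * real m powr (-q)"
    proof -
      have "P \<le> K * exp (real m powr \<alpha>)" using K(2)[of "real m"] m by (simp add: P_def)
      also have "\<dots> \<le> K * exp (L / 2)" using m_L K(1) by (simp add: L_def)
      finally have "P \<le> K * exp (L / 2)" .
      moreover have "0 < P" using m by (simp add: P_def)
      ultimately have "inverse (exp (L / 2)) \<le> K * inverse P" by (simp add: divide_simps)
      then show ?thesis by (simp add: P_def exp_minus powr_minus)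
    qed
    finally show ?thesis .
  qed
  then show ?thesis using K(1) that by blast
qed

lemma powr_diff_mean_value:
  fixes u v e :: real
  assumes "0 < u" "u < v"
  shows "\<exists>z. u < z \<and> z < v \<and> v powr e - u powr e = (v - u) * (e * z powr (e - 1))"
proof -
  have "((\<lambda>t. t powr e) has_real_derivative e * z powr (e - 1)) (at z)" if "u \<le> z" "z \<le> v" for z
    using assms that by (auto intro!: derivative_eq_intros simp: powr_diff field_simps)
  from MVT2[OF assms(2) this] show ?thesis by auto
qed

lemma neg_ln_le_sqrt:
  fixes x :: real
  assumes "0 < x"
  shows "x * (- ln x) / 2 \<le> x powr (1 / 2)"
proof -
  have "- ln x / 2 = ln (x powr (-1 / 2))" using assms by (simp add: ln_powr)
  also have "\<dots> \<le> x powr (-1 / 2)" using ln_le_minus_one[of "x powr (-1 / 2)"] assms by simp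
  finally have "x * (- ln x / 2) \<le> x * x powr (-1 / 2)" using assms by (intro mult_left_mono) auto
  also have "\<dots> = x powr (1 / 2)" using assms by (simp add: powr_diff [symmetric] powr_mult_base)
  finally show ?thesis by simp
qed

lemma le_neg_ln_if_le_exp:
  fixes x c :: real
  assumes "0 < x" "x \<le> exp (- c)"
  shows "c \<le> - ln x"
proof -
  have "ln x \<le> ln (exp (- c))" using assms by (subst ln_le_cancel_iff) auto
  then show ?thesis by simp
qed

lemma powr_threshold:
  fixes x Q e :: real
  assumes "0 < x" "0 < Q"
  shows "(x powr (-1 / Q)) powr (-Q) = x"
    and "(x powr (-1 / Q)) powr (-e) = x powr (e / Q)"
    and "x * (x powr (-1 / Q)) powr (Q - e) = x powr (e / Q)"
proof -
  have *: "(x powr (-1 / Q)) powr d = x powr (- d / Q)" for d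
    unfolding powr_powr by (intro arg_cong[where f="\<lambda>d. x powr d"]) simp
  show "(x powr (-1 / Q)) powr (-Q) = x" "(x powr (-1 / Q)) powr (-e) = x powr (e / Q)"
    unfolding * using assms by simp_all
  have "x * x powr (- (Q - e) / Q) = x powr (1 + - (Q - e) / Q)"
    using assms by (simp add: powr_add)
  also have "1 + - (Q - e) / Q = e / Q" using assms by (simp add: field_simps)
  finally show "x * (x powr (-1 / Q)) powr (Q - e) = x powr (e / Q)" by (simp only: *)
qed

lemma nat_ceiling_bounds:
  fixes y :: real
  assumes "1 \<le> y"
  shows "1 \<le> nat \<lceil>y\<rceil>" "y \<le> real (nat \<lceil>y\<rceil>)" "real (nat \<lceil>y\<rceil>) \<le> 2 * y"
  using assms by linarith+

lemma nat_floor_bounds: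
  fixes w :: real
  assumes "2 \<le> w"
  shows "1 \<le> nat \<lfloor>w\<rfloor>" "real (nat \<lfloor>w\<rfloor>) \<le> w" "w / 2 \<le> real (nat \<lfloor>w\<rfloor>)"
  using assms by linarith+

lemma obtain_nat_powr_ge:
  fixes L q :: real
  assumes "1 \<le> L" "0 < q"
  obtains m :: nat where "1 \<le> m" "L \<le> real m powr q" "real m \<le> 2 * L powr (1 / q)"
proof -
  define y where "y = L powr (1 / q)"
  have y: "1 \<le> y" using assms by (simp add: y_def ge_one_powr_ge_zero)
  have "L = y powr q" using assms by (simp add: y_def powr_powr)
  also have "\<dots> \<le> real (nat \<lceil>y\<rceil>) powr q" using nat_ceiling_bounds[OF y] y assms by (intro powr_mono2) auto
  finally show ?thesis using that nat_ceiling_bounds[OF y] by (simp add: y_def)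
qed

section \<open>Sums of powers\<close>

lemma sum_greaterThanAtMost_le_telescope:
  fixes f g :: "nat \<Rightarrow> real"
  assumes "m \<le> N" "\<And>j. m < j \<Longrightarrow> j \<le> N \<Longrightarrow> f j \<le> g (j - 1) - g j"
  shows "(\<Sum>j\<in>{m<..N}. f j) \<le> g m - g N"
  using assms
proof (induction N rule: dec_induct)
  case (step n)
  have "{m<..Suc n} = insert (Suc n) {m<..n}" using step.hyps by auto
  then have "(\<Sum>j\<in>{m<..Suc n}. f j) = f (Suc n) + (\<Sum>j\<in>{m<..n}. f j)" by simp
  also have "\<dots> \<le> (g n - g (Suc n)) + (g m - g n)"
    using step.prems[of "Suc n"] step.IH step.prems step.hyps by (intro add_mono) auto
  finally show ?case by simp
qed simp

lemma infsum_greaterThan_le_bound: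
  fixes f :: "nat \<Rightarrow> real"
  assumes nonneg: "\<And>j. m < j \<Longrightarrow> 0 \<le> f j" and bound: "\<And>N. (\<Sum>j\<in>{m<..N}. f j) \<le> B"
  shows "f summable_on {m<..}" "infsum f {m<..} \<le> B"
proof -
  have finite_sums: "sum f F \<le> B" if "finite F" "F \<subseteq> {m<..}" for F
  proof (cases "F = {}")
    case True
    then show ?thesis using bound[of m] by simp
  next
    case False
    have "sum f F \<le> sum f {m<..Max F}"
      using that False nonneg by (intro sum_mono2) auto
    also have "\<dots> \<le> B" by (rule bound)
    finally show ?thesis .
  qed
  show summable: "f summable_on {m<..}"
    by (rule nonneg_bdd_above_summable_on) (use nonneg finite_sums in \<open>auto simp: bdd_above_def\<close>)
  show "infsum f {m<..} \<le> B"
    by (rule infsum_le_finite_sums[OF summable finite_sums])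
qed

lemma powr_tail_step:
  fixes q :: real
  assumes "1 < q" "2 \<le> j"
  shows "real j powr (-q) \<le> (real (j - 1) powr (1 - q) - real j powr (1 - q)) / (q - 1)"
proof -
  obtain z where z: "real j - 1 < z" "z < real j"
    and mvt: "real j powr (1 - q) - (real j - 1) powr (1 - q) = (1 - q) * z powr (-q)"
    using powr_diff_mean_value[of "real j - 1" "real j" "1 - q"] assms by auto
  have "real (j - 1) powr (1 - q) - real j powr (1 - q) = (q - 1) * z powr (-q)"
    using mvt assms by (simp add: of_nat_diff algebra_simps)
  then have "(real (j - 1) powr (1 - q) - real j powr (1 - q)) / (q - 1) = z powr (-q)"
    using assms by simp
  moreover have "real j powr (-q) \<le> z powr (-q)" using z assms by (intro powr_mono2') auto
  ultimately show ?thesis by simp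
qed

lemma powr_tail_sum_le:
  fixes q :: real
  assumes "1 < q" "1 \<le> m"
  shows "(\<Sum>j\<in>{m<..N}. real j powr (-q)) \<le> real m powr (1 - q) / (q - 1)"
proof (cases "m \<le> N")
  case True
  have "(\<Sum>j\<in>{m<..N}. real j powr (-q))
      \<le> real m powr (1 - q) / (q - 1) - real N powr (1 - q) / (q - 1)"
    using powr_tail_step[OF assms(1)] assms
    by (intro sum_greaterThanAtMost_le_telescope[OF True]) (auto simp: diff_divide_distrib)
  moreover have "0 \<le> real N powr (1 - q) / (q - 1)" using assms by simp
  ultimately show ?thesis by linarith
qed (use assms in simp)

lemma powr_tail_infsum_bounds:
  fixes q :: real
  assumes "1 < q" "1 \<le> m"
  shows "(\<lambda>j. real j powr (-q)) summable_on {m<..}"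
    and "infsum (\<lambda>j. real j powr (-q)) {m<..} \<le> real m powr (1 - q) / (q - 1)"
    and "2 powr (-q) * real m powr (1 - q) \<le> infsum (\<lambda>j. real j powr (-q)) {m<..}"
proof -
  show summable: "(\<lambda>j. real j powr (-q)) summable_on {m<..}"
    and "infsum (\<lambda>j. real j powr (-q)) {m<..} \<le> real m powr (1 - q) / (q - 1)"
    using infsum_greaterThan_le_bound[OF _ powr_tail_sum_le[OF assms]] by auto
  have "2 powr (-q) * real m powr (1 - q) = real (card {m<..2*m}) * real (2*m) powr (-q)"
    using assms by (simp add: powr_mult powr_diff powr_minus field_simps)
  also have "\<dots> \<le> (\<Sum>j\<in>{m<..2*m}. real j powr (-q))"
    using assms by (intro sum_bounded_below powr_mono2') auto
  also have "\<dots> \<le> infsum (\<lambda>j. real j powr (-q)) {m<..}"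
    by (rule finite_sum_le_infsum[OF summable]) auto
  finally show "2 powr (-q) * real m powr (1 - q) \<le> infsum (\<lambda>j. real j powr (-q)) {m<..}" .
qed

lemma powr_integral_step:
  fixes r :: real
  assumes "-1 < r" "1 \<le> j"
  shows "0 \<le> r \<Longrightarrow> (real j powr (r + 1) - real (j - 1) powr (r + 1)) / (r + 1) \<le> real j powr r"
    and "r \<le> 0 \<Longrightarrow> real j powr r \<le> (real j powr (r + 1) - real (j - 1) powr (r + 1)) / (r + 1)"
proof -
  define D where "D = (real j powr (r + 1) - real (j - 1) powr (r + 1)) / (r + 1)"
  have "(0 \<le> r \<longrightarrow> D \<le> real j powr r) \<and> (r \<le> 0 \<longrightarrow> real j powr r \<le> D)"
  proof (cases "j = 1")
    case True
    then show ?thesis using assms by (simp add: D_def field_simps)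
  next
    case False
    then obtain z where z: "real j - 1 < z" "z < real j"
      and mvt: "real j powr (r + 1) - (real j - 1) powr (r + 1) = (real j - (real j - 1)) * ((r + 1) * z powr (r + 1 - 1))"
      using powr_diff_mean_value[of "real j - 1" "real j" "r + 1"] assms by auto
    have "D = z powr r" using mvt assms False by (simp add: D_def of_nat_diff)
    then show ?thesis using z assms by (auto intro: powr_mono2 powr_mono2')
  qed
  then show "0 \<le> r \<Longrightarrow> D \<le> real j powr r" and "r \<le> 0 \<Longrightarrow> real j powr r \<le> D" by auto
qed

lemma powr_partial_sum_bounds:
  fixes r :: real
  assumes "-1 < r" "1 \<le> m"
  shows "min 1 (1 / (r + 1)) * real m powr (r + 1) \<le> (\<Sum>j=1..m. real j powr r)"
    and "(\<Sum>j=1..m. real j powr r) \<le> max 1 (1 / (r + 1)) * real m powr (r + 1)"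
proof -
  define F where "F j = real j powr (r + 1) / (r + 1)" for j
  have atLeast1: "{1..m} = {0<..m}" by auto
  have card: "real (card {1..m}) * real m powr r = real m powr (r + 1)"
    using assms by (simp add: powr_add)
  have F: "F 0 = 0" "F m = 1 / (r + 1) * real m powr (r + 1)" using assms by (simp_all add: F_def)
  have scale: "min 1 (1 / (r + 1)) * real m powr (r + 1) \<le> c * real m powr (r + 1)"
    "c * real m powr (r + 1) \<le> max 1 (1 / (r + 1)) * real m powr (r + 1)"
    if "c = 1 \<or> c = 1 / (r + 1)" for c
    using that by (auto intro!: mult_right_mono)
  have "min 1 (1 / (r + 1)) * real m powr (r + 1) \<le> (\<Sum>j=1..m. real j powr r)
      \<and> (\<Sum>j=1..m. real j powr r) \<le> max 1 (1 / (r + 1)) * real m powr (r + 1)"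
  proof (cases "0 \<le> r")
    case True
    have step: "- (real j powr r) \<le> F (j - 1) - F j" if "0 < j" for j
      using powr_integral_step(1)[OF assms(1), of j] that True by (simp add: F_def diff_divide_distrib)
    have "(\<Sum>j\<in>{0<..m}. - (real j powr r)) \<le> F 0 - F m"
      by (rule sum_greaterThanAtMost_le_telescope, simp, rule step) simp
    then have "F m \<le> (\<Sum>j=1..m. real j powr r)" unfolding atLeast1 by (simp add: sum_negf F)
    moreover have "(\<Sum>j=1..m. real j powr r) \<le> real (card {1..m}) * real m powr r"
      using True by (intro sum_bounded_above powr_mono2) auto
    ultimately show ?thesis using F card scale[of 1] scale[of "1 / (r + 1)"] by auto
  next
    case False
    have step: "real j powr r \<le> - F (j - 1) - - F j" if "0 < j" for j
      using powr_integral_step(2)[OF assms(1), of j] that False by (simp add: F_def diff_divide_distrib)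
    have "(\<Sum>j\<in>{0<..m}. real j powr r) \<le> - F 0 - - F m"
      by (rule sum_greaterThanAtMost_le_telescope, simp, rule step) simp
    then have "(\<Sum>j=1..m. real j powr r) \<le> F m" unfolding atLeast1 by (simp add: F)
    moreover have "real (card {1..m}) * real m powr r \<le> (\<Sum>j=1..m. real j powr r)"
      using False by (intro sum_bounded_below powr_mono2') auto
    ultimately show ?thesis using F card scale[of 1] scale[of "1 / (r + 1)"] by auto
  qed
  then show "min 1 (1 / (r + 1)) * real m powr (r + 1) \<le> (\<Sum>j=1..m. real j powr r)"
    and "(\<Sum>j=1..m. real j powr r) \<le> max 1 (1 / (r + 1)) * real m powr (r + 1)" by auto
qed

lemma harmonic_partial_sum_bounds:
  assumes "1 \<le> m"
  shows "ln (real m + 1) \<le> (\<Sum>j=1..m. real j powr (-1))"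
    and "(\<Sum>j=1..m. real j powr (-1)) \<le> 1 + ln (real m)"
proof -
  have harm: "(\<Sum>j=1..m. real j powr (-1)) = harm m"
    unfolding harm_def by (intro sum.cong) (auto simp: powr_minus)
  show "ln (real m + 1) \<le> (\<Sum>j=1..m. real j powr (-1))"
    unfolding harm by (rule harm_ge_ln)
  show "(\<Sum>j=1..m. real j powr (-1)) \<le> 1 + ln (real m)"
    using euler_mascheroni_sequence_decreasing[of 1 m] assms by (simp add: harm harm_def inverse_eq_divide)
qed

lemma one_le_powr_partial_sum:
  assumes "1 \<le> m"
  shows "1 \<le> (\<Sum>j=1..m. real j powr r)"
proof -
  have "{1..m} = insert 1 {1<..m}" using assms by auto
  then show ?thesis by (simp add: sum_nonneg)
qed

lemma convergent_powr_partial_sum_le: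
  fixes r :: real
  assumes "r < -1" "1 \<le> m"
  shows "(\<Sum>j=1..m. real j powr r) \<le> 1 + 1 / (-r - 1)"
proof -
  have "{1..m} = insert 1 {1<..m}" using assms by auto
  then have "(\<Sum>j=1..m. real j powr r) = 1 + (\<Sum>j\<in>{1<..m}. real j powr -(-r))" by simp
  then show ?thesis using powr_tail_sum_le[of "-r" 1 m] assms by simp
qed

lemma eventually_at_right_0_leI:
  fixes P :: "real \<Rightarrow> bool"
  assumes "0 < x0" "\<And>x. 0 < x \<Longrightarrow> x \<le> x0 \<Longrightarrow> P x"
  shows "eventually P (at_right 0)"
  unfolding eventually_at_right_field using assms by (intro exI[of _ x0]) auto

lemma bigo_at_right_0I:
  fixes f g :: "real \<Rightarrow> real"
  assumes "0 < x0" "\<And>x. 0 < x \<Longrightarrow> x \<le> x0 \<Longrightarrow> 0 \<le> f x \<and> f x \<le> C * g x"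
  shows "f \<in> O[at_right 0](g)"
proof (rule bigoI)
  have "norm (f x) \<le> \<bar>C\<bar> * norm (g x)" if "0 \<le> f x" "f x \<le> C * g x" for x
    using that abs_ge_self[of "C * g x"] by (simp add: abs_mult)
  then show "eventually (\<lambda>x. norm (f x) \<le> \<bar>C\<bar> * norm (g x)) (at_right 0)"
    using assms by (intro eventually_at_right_0_leI) auto
qed

lemma bigomega_at_right_0I:
  fixes f g :: "real \<Rightarrow> real"
  assumes "0 < x0" "0 < c" "\<And>x. 0 < x \<Longrightarrow> x \<le> x0 \<Longrightarrow> 0 \<le> g x \<and> c * g x \<le> f x"
  shows "f \<in> \<Omega>[at_right 0](g)"
proof (rule landau_omega.bigI[OF assms(2)])
  show "eventually (\<lambda>x. c * norm (g x) \<le> norm (f x)) (at_right 0)"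
    using assms by (intro eventually_at_right_0_leI[OF assms(1)]) force
qed

lemma bigtheta_at_sample_level:
  fixes R f :: "real \<Rightarrow> real" and g :: "nat \<Rightarrow> real"
  assumes "R \<in> \<Theta>[at_right 0](f)" "(\<lambda>n. f ((1 + ln (real n)) / real n)) \<in> \<Theta>(g)"
  shows "(\<lambda>n. R ((1 + ln (real n)) / real n)) \<in> \<Theta>(g)"
proof -
  have "filterlim (\<lambda>n::nat. (1 + ln (real n)) / real n) (at_right 0) at_top" by real_asymp
  from landau_theta.compose[OF assms(1) this] show ?thesis by (rule landau_theta.trans) (rule assms(2))
qed

lemma Rm_nonneg:
  assumes "\<And>j. 0 \<le> \<beta> j"
  shows "0 \<le> Rm \<beta> \<gamma> l m x"
proof -
  have "0 \<le> (\<Sum>\<^sub>\<infinity>j\<in>{m<..}. (l j)\<^sup>2 / \<beta> j)" using assms by (intro infsum_nonneg) auto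
  then show ?thesis unfolding Rm_def by linarith
qed

lemma Rstar_le_Rm:
  assumes "\<And>j. 0 \<le> \<beta> j" "1 \<le> m"
  shows "Rstar \<beta> \<gamma> l x \<le> Rm \<beta> \<gamma> l m x"
  unfolding Rstar_def using assms Rm_nonneg[OF assms(1)]
  by (intro cINF_lower bdd_belowI[where m=0]) auto

lemma le_RstarI:
  assumes "\<And>m. 1 \<le> m \<Longrightarrow> c \<le> Rm \<beta> \<gamma> l m x"
  shows "c \<le> Rstar \<beta> \<gamma> l x"
  unfolding Rstar_def using assms by (intro cINF_greatest) auto

lemma Rstar_nonneg:
  assumes "\<And>j. 0 \<le> \<beta> j"
  shows "0 \<le> Rstar \<beta> \<gamma> l x"
  using Rm_nonneg[OF assms] by (intro le_RstarI)

lemma Rm_le_maxI: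
  assumes "(\<Sum>\<^sub>\<infinity>j\<in>{m<..}. (l j)\<^sup>2 / \<beta> j) \<le> A"
    and "max (\<gamma> m / \<beta> m) x * (\<Sum>j=1..m. (l j)\<^sup>2 / \<gamma> j) \<le> B"
  shows "Rm \<beta> \<gamma> l m x \<le> max A B"
  using assms unfolding Rm_def by linarith

lemma tail_le_Rm: "(\<Sum>\<^sub>\<infinity>j\<in>{m<..}. (l j)\<^sup>2 / \<beta> j) \<le> Rm \<beta> \<gamma> l m x"
  unfolding Rm_def by linarith

lemma weighted_sum_le_Rm:
  assumes "0 \<le> (\<Sum>j=1..m. (l j)\<^sup>2 / \<gamma> j)"
  shows "x * (\<Sum>j=1..m. (l j)\<^sup>2 / \<gamma> j) \<le> Rm \<beta> \<gamma> l m x"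
    and "\<gamma> m / \<beta> m * (\<Sum>j=1..m. (l j)\<^sup>2 / \<gamma> j) \<le> Rm \<beta> \<gamma> l m x"
  using mult_right_mono[OF max.cobounded2 assms] mult_right_mono[OF max.cobounded1 assms]
  unfolding Rm_def by (smt (verit))+

locale power_functional =
  fixes l :: "nat \<Rightarrow> real" and s :: real
  assumes l_squared: "\<And>j. 1 \<le> j \<Longrightarrow> (l j)\<^sup>2 = real j powr (-2 * s)"
begin

lemma poly_tail_bounds:
  assumes "0 < 2 * p + 2 * s - 1" "1 \<le> m"
  shows "2 powr (- (2 * p + 2 * s)) * real m powr (- (2 * p + 2 * s - 1))
           \<le> (\<Sum>\<^sub>\<infinity>j\<in>{m<..}. (l j)\<^sup>2 / real j powr (2 * p))"
    and "(\<Sum>\<^sub>\<infinity>j\<in>{m<..}. (l j)\<^sup>2 / real j powr (2 * p))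
           \<le> real m powr (- (2 * p + 2 * s - 1)) / (2 * p + 2 * s - 1)"
proof -
  have "(l j)\<^sup>2 / real j powr (2 * p) = real j powr (- (2 * p + 2 * s))" if "1 \<le> j" for j
  proof -
    have "(l j)\<^sup>2 / real j powr (2 * p) = real j powr (-2 * s - 2 * p)"
      using that by (simp add: l_squared powr_diff)
    also have "-2 * s - 2 * p = - (2 * p + 2 * s)" by simp
    finally show ?thesis .
  qed
  then have "(\<Sum>\<^sub>\<infinity>j\<in>{m<..}. (l j)\<^sup>2 / real j powr (2 * p)) = (\<Sum>\<^sub>\<infinity>j\<in>{m<..}. real j powr (- (2 * p + 2 * s)))"
    using assms(2) by (intro infsum_cong) simp
  then show "2 powr (- (2 * p + 2 * s)) * real m powr (- (2 * p + 2 * s - 1))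
           \<le> (\<Sum>\<^sub>\<infinity>j\<in>{m<..}. (l j)\<^sup>2 / real j powr (2 * p))"
    and "(\<Sum>\<^sub>\<infinity>j\<in>{m<..}. (l j)\<^sup>2 / real j powr (2 * p))
           \<le> real m powr (- (2 * p + 2 * s - 1)) / (2 * p + 2 * s - 1)"
    using powr_tail_infsum_bounds[of "2 * p + 2 * s" m] assms by (auto simp: algebra_simps)
qed

lemma poly_weighted_sum:
  "(\<Sum>j=1..m. (l j)\<^sup>2 / real j powr (-2 * a)) = (\<Sum>j=1..m. real j powr (2 * a - 2 * s))"
  by (intro sum.cong) (auto simp: l_squared powr_diff powr_minus field_simps)

end

section \<open>Polynomial ellipsoid, polynomial covariance\<close>

context power_functional
begin

lemma Rstar_poly_poly_le:
  assumes "0 < 2 * p + 2 * s - 1" "1 \<le> m" "real m powr (- (2 * p + 2 * a)) \<le> x"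
  shows "Rstar (\<lambda>j. real j powr (2 * p)) (\<lambda>j. real j powr (-2 * a)) l x
      \<le> max (real m powr (- (2 * p + 2 * s - 1)) / (2 * p + 2 * s - 1))
             (x * (\<Sum>j=1..m. real j powr (2 * a - 2 * s)))"
proof -
  have "real m powr (-2 * a) / real m powr (2 * p) = real m powr (- (2 * p + 2 * a))"
    by (simp add: powr_diff [symmetric] add.commute)
  then have "max (real m powr (-2 * a) / real m powr (2 * p)) x = x" using assms(3) by simp
  then have "max (real m powr (-2 * a) / real m powr (2 * p)) x * (\<Sum>j=1..m. (l j)\<^sup>2 / real j powr (-2 * a))
      = x * (\<Sum>j=1..m. real j powr (2 * a - 2 * s))"
    unfolding poly_weighted_sum by simp
  then have "Rm (\<lambda>j. real j powr (2 * p)) (\<lambda>j. real j powr (-2 * a)) l m x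
      \<le> max (real m powr (- (2 * p + 2 * s - 1)) / (2 * p + 2 * s - 1))
             (x * (\<Sum>j=1..m. real j powr (2 * a - 2 * s)))"
    by (intro Rm_le_maxI poly_tail_bounds(2) assms(1,2)) simp
  then show ?thesis using Rstar_le_Rm[of _ m] assms(2) by (meson order.trans powr_ge_zero)
qed

lemma Rm_poly_poly_ge:
  assumes "0 < 2 * p + 2 * s - 1" "1 \<le> m"
  shows "2 powr (- (2 * p + 2 * s)) * real m powr (- (2 * p + 2 * s - 1))
           \<le> Rm (\<lambda>j. real j powr (2 * p)) (\<lambda>j. real j powr (-2 * a)) l m x"
    and "x * (\<Sum>j=1..m. real j powr (2 * a - 2 * s))
           \<le> Rm (\<lambda>j. real j powr (2 * p)) (\<lambda>j. real j powr (-2 * a)) l m x"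
proof -
  show "2 powr (- (2 * p + 2 * s)) * real m powr (- (2 * p + 2 * s - 1))
           \<le> Rm (\<lambda>j. real j powr (2 * p)) (\<lambda>j. real j powr (-2 * a)) l m x"
    using poly_tail_bounds(1)[OF assms(1,2)] tail_le_Rm by (rule order.trans)
  have "0 \<le> (\<Sum>j=1..m. (l j)\<^sup>2 / real j powr (-2 * a))"
    unfolding poly_weighted_sum by (intro sum_nonneg) simp
  from weighted_sum_le_Rm(1)[OF this]
  show "x * (\<Sum>j=1..m. real j powr (2 * a - 2 * s))
           \<le> Rm (\<lambda>j. real j powr (2 * p)) (\<lambda>j. real j powr (-2 * a)) l m x"
    unfolding poly_weighted_sum .
qed

lemma Rstar_poly_poly_regular_bigo:
  assumes "0 < p" "0 < a" "0 < 2 * p + 2 * s - 1" "-1 < 2 * a - 2 * s"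
  shows "Rstar (\<lambda>j. real j powr (2 * p)) (\<lambda>j. real j powr (-2 * a)) l
           \<in> O[at_right 0](\<lambda>x. x powr ((2 * p + 2 * s - 1) / (2 * p + 2 * a)))"
proof -
  define t Q r where "t = 2 * p + 2 * s - 1" and "Q = 2 * p + 2 * a" and "r = 2 * a - 2 * s"
  have t: "0 < t" and Q: "0 < Q" and r: "-1 < r" and Qt: "Q - t = r + 1"
    using assms by (auto simp: t_def Q_def r_def)
  define K where "K = max 1 (1 / (r + 1))"
  have "Rstar (\<lambda>j. real j powr (2 * p)) (\<lambda>j. real j powr (-2 * a)) l x
      \<le> (1 / t + K * 2 powr (r + 1)) * x powr (t / Q)" if x: "0 < x" "x \<le> 1" for x
  proof -
    \<comment> \<open>balancing index: \<open>\<gamma>\<^sub>m/\<beta>\<^sub>m = m powr (-Q)\<close> drops below \<open>x\<close> once \<open>m \<ge> y\<close>\<close>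
    define y where "y = x powr (-1 / Q)"
    have y: "1 \<le> y" using powr_mono2'[of "-1 / Q" x 1] x Q by (simp add: y_def)
    then obtain m where m: "1 \<le> m" "y \<le> real m" "real m \<le> 2 * y"
      using nat_ceiling_bounds by blast
    have "real m powr (-Q) \<le> y powr (-Q)" "real m powr (-t) \<le> y powr (-t)"
      using m Q t y by (intro powr_mono2'; simp)+
    then have m_Q: "real m powr (-Q) \<le> x" and m_t: "real m powr (-t) / t \<le> x powr (t / Q) / t"
      using powr_threshold(1)[OF x(1) Q] powr_threshold(2)[OF x(1) Q, of t] t unfolding y_def by (simp_all add: divide_right_mono)
    have "x * (\<Sum>j=1..m. real j powr r) \<le> x * (K * real m powr (r + 1))"
      using powr_partial_sum_bounds(2)[OF r m(1)] x by (simp add: K_def)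
    also have "\<dots> \<le> x * (K * (2 * y) powr (r + 1))"
      using m r x y by (intro mult_left_mono powr_mono2) (auto simp: K_def)
    also have "\<dots> = K * 2 powr (r + 1) * (x * y powr (Q - t))"
      using y by (simp add: Qt powr_mult)
    also have "x * y powr (Q - t) = x powr (t / Q)"
      unfolding y_def by (rule powr_threshold(3)[OF x(1) Q])
    finally have m_sum: "x * (\<Sum>j=1..m. real j powr r) \<le> K * 2 powr (r + 1) * x powr (t / Q)" .
    have "Rstar (\<lambda>j. real j powr (2 * p)) (\<lambda>j. real j powr (-2 * a)) l x
        \<le> max (real m powr (-t) / t) (x * (\<Sum>j=1..m. real j powr r))"
      using Rstar_poly_poly_le[of p m a x] assms m_Q m by (simp add: t_def Q_def r_def)
    also have "\<dots> \<le> (1 / t + K * 2 powr (r + 1)) * x powr (t / Q)"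
      using m_t m_sum t r by (auto simp: K_def field_simps intro: add_increasing add_increasing2)
    finally show ?thesis .
  qed
  then show ?thesis
    unfolding t_def [symmetric] Q_def [symmetric]
    by (intro bigo_at_right_0I[OF zero_less_one]) (auto intro: Rstar_nonneg)
qed

lemma Rstar_poly_poly_regular_bigomega:
  assumes "0 < p" "0 < a" "0 < 2 * p + 2 * s - 1" "-1 < 2 * a - 2 * s"
  shows "Rstar (\<lambda>j. real j powr (2 * p)) (\<lambda>j. real j powr (-2 * a)) l
           \<in> \<Omega>[at_right 0](\<lambda>x. x powr ((2 * p + 2 * s - 1) / (2 * p + 2 * a)))"
proof -
  define t Q r where "t = 2 * p + 2 * s - 1" and "Q = 2 * p + 2 * a" and "r = 2 * a - 2 * s"
  have t: "0 < t" and Q: "0 < Q" and r: "-1 < r" and Qt: "Q - t = r + 1"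
    using assms by (auto simp: t_def Q_def r_def)
  define c where "c = min (2 powr (- (t + 1))) (min 1 (1 / (r + 1)))"
  have "c * x powr (t / Q) \<le> Rm (\<lambda>j. real j powr (2 * p)) (\<lambda>j. real j powr (-2 * a)) l m x"
    if x: "0 < x" and m: "1 \<le> m" for x m
  proof -
    define y where "y = x powr (-1 / Q)"
    have y: "0 < y" using x by (simp add: y_def)
    note Rm_ge = Rm_poly_poly_ge[OF assms(3) m, where a = a and x = x, folded t_def r_def]
    show ?thesis
    proof (cases "real m \<le> y")
      case True
      have "x powr (t / Q) \<le> real m powr (-t)"
        using powr_threshold(2)[OF x Q, of t] powr_mono2'[of "-t" "real m" y] True t m
        by (simp add: y_def)
      then have "c * x powr (t / Q) \<le> 2 powr (- (t + 1)) * real m powr (-t)"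
        by (intro mult_mono) (auto simp: c_def)
      also have "\<dots> \<le> Rm (\<lambda>j. real j powr (2 * p)) (\<lambda>j. real j powr (-2 * a)) l m x"
        using Rm_ge(1) by (simp add: t_def algebra_simps)
      finally show ?thesis .
    next
      case False
      have "y powr (r + 1) \<le> real m powr (r + 1)" using False r y by (intro powr_mono2) auto
      moreover have "x * y powr (r + 1) = x powr (t / Q)"
        unfolding y_def Qt [symmetric] by (rule powr_threshold(3)[OF x Q])
      ultimately have "x powr (t / Q) \<le> x * real m powr (r + 1)"
        using x by (metis mult_left_mono less_imp_le)
      then have "c * x powr (t / Q) \<le> min 1 (1 / (r + 1)) * (x * real m powr (r + 1))"
        using r by (intro mult_mono) (auto simp: c_def)
      also have "\<dots> = x * (min 1 (1 / (r + 1)) * real m powr (r + 1))" by (simp add: mult_ac)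
      also have "\<dots> \<le> x * (\<Sum>j=1..m. real j powr r)"
        using powr_partial_sum_bounds(1)[OF r m] x by simp
      also have "\<dots> \<le> Rm (\<lambda>j. real j powr (2 * p)) (\<lambda>j. real j powr (-2 * a)) l m x"
        by (rule Rm_ge(2))
      finally show ?thesis .
    qed
  qed
  moreover have "0 < c" using r by (simp add: c_def)
  ultimately show ?thesis
    unfolding t_def [symmetric] Q_def [symmetric]
    by (intro bigomega_at_right_0I[OF zero_less_one]) (auto intro: le_RstarI)
qed

lemma Rstar_poly_poly_critical_bigo:
  assumes "0 < p" "0 < a" "2 * a - 2 * s = -1"
  shows "Rstar (\<lambda>j. real j powr (2 * p)) (\<lambda>j. real j powr (-2 * a)) l \<in> O[at_right 0](\<lambda>x. x * (- ln x))"
proof -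
  define Q where "Q = 2 * p + 2 * a"
  have Q: "0 < Q" and t: "2 * p + 2 * s - 1 = Q" using assms by (auto simp: Q_def)
  have "Rstar (\<lambda>j. real j powr (2 * p)) (\<lambda>j. real j powr (-2 * a)) l x \<le> (2 + 2 / Q) * (x * (- ln x))"
    if x: "0 < x" "x \<le> exp (-1)" for x
  proof -
    define L where "L = - ln x"
    have L: "1 \<le> L" unfolding L_def using le_neg_ln_if_le_exp[OF x] by simp
    define y where "y = x powr (-1 / Q)"
    have "x \<le> 1" using x(2) by (rule order.trans) simp
    then have y: "1 \<le> y" using powr_mono2'[of "-1 / Q" x 1] x Q by (simp add: y_def)
    have ln_y: "ln y = L / Q" using x by (simp add: y_def L_def ln_powr)
    obtain m where m: "1 \<le> m" "y \<le> real m" "real m \<le> 2 * y"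
      using nat_ceiling_bounds[OF y] by blast
    have "real m powr (-Q) \<le> y powr (-Q)" using m Q y by (intro powr_mono2') auto
    then have m_Q: "real m powr (-Q) \<le> x" using powr_threshold(1)[OF x(1) Q] by (simp add: y_def)
    have "x * (\<Sum>j=1..m. real j powr (-1)) \<le> x * (1 + ln (2 * y))"
    proof (intro mult_left_mono)
      have "ln (real m) \<le> ln (2 * y)" using m y by (subst ln_le_cancel_iff) auto
      then show "(\<Sum>j=1..m. real j powr (-1)) \<le> 1 + ln (2 * y)"
        using harmonic_partial_sum_bounds(2)[OF m(1)] by linarith
    qed (use x in simp)
    also have "\<dots> \<le> x * ((2 + 1 / Q) * L)"
    proof (intro mult_left_mono)
      have "ln (2 * y) = ln 2 + L / Q" using y ln_y by (simp add: ln_mult)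
      moreover have "ln 2 \<le> (1::real)" using ln_le_minus_one[of 2] by simp
      moreover have "(2 + 1 / Q) * L = 2 * L + L / Q" by (simp add: algebra_simps)
      ultimately show "1 + ln (2 * y) \<le> (2 + 1 / Q) * L" using L by linarith
    qed (use x in simp)
    finally have m_sum: "x * (\<Sum>j=1..m. real j powr (-1)) \<le> (2 + 1 / Q) * (x * L)"
      by (simp only: mult_ac)
    have "Rstar (\<lambda>j. real j powr (2 * p)) (\<lambda>j. real j powr (-2 * a)) l x
        \<le> max (real m powr (-Q) / Q) (x * (\<Sum>j=1..m. real j powr (-1)))"
      using Rstar_poly_poly_le[of p m a x] assms m_Q m Q by (simp add: t Q_def)
    also have "\<dots> \<le> (2 + 2 / Q) * (x * L)"
    proof (rule max.boundedI)
      have "x \<le> x * L" using L x by (simp add: mult_le_cancel_left1)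
      then have "real m powr (-Q) / Q \<le> x * L / Q" using m_Q Q by (intro divide_right_mono) auto
      moreover have "(2 + 2 / Q) * (x * L) = 2 * (x * L) + 2 * (x * L / Q)" by (simp add: algebra_simps)
      moreover have "0 \<le> x * L" "0 \<le> x * L / Q" using x L Q by simp_all
      ultimately show "real m powr (-Q) / Q \<le> (2 + 2 / Q) * (x * L)" by linarith
      have "(2 + 2 / Q) * (x * L) = (2 + 1 / Q) * (x * L) + x * L / Q" by (simp add: algebra_simps)
      then show "x * (\<Sum>j=1..m. real j powr (-1)) \<le> (2 + 2 / Q) * (x * L)"
        using m_sum \<open>0 \<le> x * L / Q\<close> by linarith
    qed
    finally show ?thesis by (simp add: L_def)
  qed
  then show ?thesis by (intro bigo_at_right_0I[OF exp_gt_zero]) (auto intro: Rstar_nonneg)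
qed

lemma Rstar_poly_poly_critical_bigomega:
  assumes "0 < p" "0 < a" "2 * a - 2 * s = -1"
  shows "Rstar (\<lambda>j. real j powr (2 * p)) (\<lambda>j. real j powr (-2 * a)) l \<in> \<Omega>[at_right 0](\<lambda>x. x * (- ln x))"
proof -
  define Q where "Q = 2 * p + 2 * a"
  have Q: "0 < Q" and t: "2 * p + 2 * s - 1 = Q" using assms by (auto simp: Q_def)
  define c where "c = min (2 powr (- (Q + 1)) / 2) (1 / (2 * Q))"
  have "c * (x * (- ln x)) \<le> Rm (\<lambda>j. real j powr (2 * p)) (\<lambda>j. real j powr (-2 * a)) l m x"
    if x: "0 < x" "x \<le> exp (-1)" and m: "1 \<le> m" for x m
  proof -
    define L where "L = - ln x"
    have L: "1 \<le> L" unfolding L_def using le_neg_ln_if_le_exp[OF x] by simp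
    define z where "z = x powr (-1 / (2 * Q))"
    have z: "0 < z" using x by (simp add: z_def)
    have t': "2 * p + 2 * s = Q + 1" using t by simp
    note Rm_ge = Rm_poly_poly_ge[OF _ m, where p = p and a = a and x = x, unfolded t assms(3), unfolded t']
    show ?thesis
    proof (cases "real m \<le> z")
      case True
      have "z powr (-Q) \<le> real m powr (-Q)" using True z Q m by (intro powr_mono2') auto
      moreover have "z powr (-Q) = x powr (1 / 2)"
        using powr_threshold(2)[OF x(1), of "2 * Q" Q] Q by (simp add: z_def)
      ultimately have "x * L / 2 \<le> real m powr (-Q)"
        using neg_ln_le_sqrt[OF x(1)] by (simp add: L_def)
      have "c * (x * L) \<le> 2 powr (- (Q + 1)) / 2 * (x * L)"
        using x L by (intro mult_right_mono) (auto simp: c_def)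
      also have "\<dots> \<le> 2 powr (- (Q + 1)) * real m powr (-Q)"
        using \<open>x * L / 2 \<le> real m powr (-Q)\<close> by simp
      also have "\<dots> \<le> Rm (\<lambda>j. real j powr (2 * p)) (\<lambda>j. real j powr (-2 * a)) l m x"
        using Rm_ge(1) Q by simp
      finally show ?thesis by (simp add: L_def)
    next
      case False
      have "ln z \<le> ln (real m + 1)" using False z by (subst ln_le_cancel_iff) auto
      also have "\<dots> \<le> (\<Sum>j=1..m. real j powr (-1))" by (rule harmonic_partial_sum_bounds(1)[OF m])
      finally have L_sum: "L / (2 * Q) \<le> (\<Sum>j=1..m. real j powr (-1))"
        using x by (simp add: z_def L_def ln_powr)
      have "c * (x * L) \<le> 1 / (2 * Q) * (x * L)"
        using x L by (intro mult_right_mono) (auto simp: c_def)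
      also have "\<dots> = x * (L / (2 * Q))" by simp
      also have "\<dots> \<le> x * (\<Sum>j=1..m. real j powr (-1))"
        using L_sum x by (intro mult_left_mono) auto
      also have "\<dots> \<le> Rm (\<lambda>j. real j powr (2 * p)) (\<lambda>j. real j powr (-2 * a)) l m x"
        using Rm_ge(2) Q by simp
      finally show ?thesis by (simp add: L_def)
    qed
  qed
  moreover have "0 < c" using Q by (simp add: c_def)
  moreover have "0 \<le> x * (- ln x)" if "0 < x" "x \<le> exp (-1)" for x :: real
  proof -
    have "ln x \<le> -1" using that ln_le_cancel_iff[of x "exp (-1)"] by simp
    then show ?thesis using that by (intro mult_nonneg_nonneg) linarith+
  qed
  ultimately show ?thesis by (intro bigomega_at_right_0I[OF exp_gt_zero]) (auto intro: le_RstarI)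
qed

lemma Rstar_poly_poly_smooth_bigtheta:
  assumes "0 < p" "0 < a" "2 * a - 2 * s < -1"
  shows "Rstar (\<lambda>j. real j powr (2 * p)) (\<lambda>j. real j powr (-2 * a)) l \<in> \<Theta>[at_right 0](\<lambda>x. x)"
proof -
  define t Q r where "t = 2 * p + 2 * s - 1" and "Q = 2 * p + 2 * a" and "r = 2 * a - 2 * s"
  have Q: "0 < Q" and "Q < t" and r: "r < -1" using assms by (auto simp: t_def Q_def r_def)
  then have t: "0 < t" by simp
  have upper: "Rstar (\<lambda>j. real j powr (2 * p)) (\<lambda>j. real j powr (-2 * a)) l x \<le> (1 / t + 1 + 1 / (-r - 1)) * x"
    if x: "0 < x" "x \<le> 1" for x
  proof -
    define y where "y = x powr (-1 / Q)"
    have y: "1 \<le> y" using powr_mono2'[of "-1 / Q" x 1] x Q by (simp add: y_def)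
    obtain m where m: "1 \<le> m" "y \<le> real m"
      using nat_ceiling_bounds[OF y] by blast
    have "real m powr (-Q) \<le> y powr (-Q)" using m Q y by (intro powr_mono2') auto
    then have m_Q: "real m powr (-Q) \<le> x" using powr_threshold(1)[OF x(1) Q] by (simp add: y_def)
    moreover have "real m powr (-t) \<le> real m powr (-Q)" using m \<open>Q < t\<close> by (intro powr_mono) auto
    ultimately have m_t: "real m powr (-t) / t \<le> x / t" using t by (simp add: divide_right_mono)
    have m_sum: "x * (\<Sum>j=1..m. real j powr r) \<le> x * (1 + 1 / (-r - 1))"
      using convergent_powr_partial_sum_le[OF r m(1)] x by (intro mult_left_mono) auto
    have "Rstar (\<lambda>j. real j powr (2 * p)) (\<lambda>j. real j powr (-2 * a)) l x
        \<le> max (real m powr (-t) / t) (x * (\<Sum>j=1..m. real j powr r))"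
      by (rule Rstar_poly_poly_le[of p m a x, folded t_def Q_def r_def]) (use t m m_Q in auto)
    also have "\<dots> \<le> x / t + x * (1 + 1 / (-r - 1))"
    proof -
      have "0 \<le> x / t" "0 \<le> x * (1 + 1 / (-r - 1))" using x t r by simp_all
      then show ?thesis using m_t m_sum by linarith
    qed
    also have "\<dots> = (1 / t + 1 + 1 / (-r - 1)) * x" by (simp add: algebra_simps)
    finally show ?thesis .
  qed
  have lower: "x \<le> Rstar (\<lambda>j. real j powr (2 * p)) (\<lambda>j. real j powr (-2 * a)) l x"
    if x: "0 < x" for x
  proof (rule le_RstarI)
    fix m :: nat assume m: "1 \<le> m"
    have "x * 1 \<le> x * (\<Sum>j=1..m. real j powr r)"
      using one_le_powr_partial_sum[OF m] x by (intro mult_left_mono) auto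
    also have "\<dots> \<le> Rm (\<lambda>j. real j powr (2 * p)) (\<lambda>j. real j powr (-2 * a)) l m x"
      using Rm_poly_poly_ge(2)[OF _ m, where p = p and a = a and x = x] t by (simp add: t_def r_def)
    finally show "x \<le> Rm (\<lambda>j. real j powr (2 * p)) (\<lambda>j. real j powr (-2 * a)) l m x" by simp
  qed
  show ?thesis
  proof (intro bigthetaI bigo_at_right_0I[OF zero_less_one] bigomega_at_right_0I[OF zero_less_one zero_less_one])
  qed (use upper lower Rstar_nonneg in auto)
qed

end

section \<open>Polynomial ellipsoid, exponential covariance\<close>

context power_functional
begin

lemma exp_weight_term:
  assumes "1 \<le> j"
  shows "(l j)\<^sup>2 / exp (- (real j powr (2 * a)) + 1) = real j powr (-2 * s) * exp (real j powr (2 * a)) / exp 1"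
proof -
  have "exp (- (real j powr (2 * a)) + 1) = exp 1 / exp (real j powr (2 * a))"
    by (simp add: exp_diff [symmetric])
  then show ?thesis using assms by (simp add: l_squared)
qed

lemma exp_weighted_sum_le:
  assumes "0 < a"
  obtains K where "0 < K"
    and "\<And>m. 1 \<le> m \<Longrightarrow> (\<Sum>j=1..m. (l j)\<^sup>2 / exp (- (real j powr (2 * a)) + 1))
           \<le> K * real m powr (1 - 2 * s) * exp (real m powr (2 * a))"
proof -
  obtain K where K: "0 < K" "\<And>j m. 1 \<le> j \<Longrightarrow> j \<le> m \<Longrightarrow>
      real j powr (-2 * s) * exp (real j powr (2 * a)) \<le> K * (real m powr (-2 * s) * exp (real m powr (2 * a)))"
    using powr_mul_exp_powr_quasi_mono[where \<alpha> = "2 * a" and k = "-2 * s"] assms by auto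
  have "(\<Sum>j=1..m. (l j)\<^sup>2 / exp (- (real j powr (2 * a)) + 1))
      \<le> K * real m powr (1 - 2 * s) * exp (real m powr (2 * a))" if m: "1 \<le> m" for m
  proof -
    have "(\<Sum>j=1..m. (l j)\<^sup>2 / exp (- (real j powr (2 * a)) + 1))
        \<le> (\<Sum>j=1..m. K * (real m powr (-2 * s) * exp (real m powr (2 * a))))"
    proof (rule sum_mono)
      fix j assume j: "j \<in> {1..m}"
      have "(l j)\<^sup>2 / exp (- (real j powr (2 * a)) + 1) = real j powr (-2 * s) * exp (real j powr (2 * a)) / exp 1"
        using j by (intro exp_weight_term) simp
      also have "\<dots> \<le> real j powr (-2 * s) * exp (real j powr (2 * a))"
        using exp_ge_add_one_self[of 1] by (simp add: divide_le_eq mult_le_cancel_left1 not_less)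
      finally have "(l j)\<^sup>2 / exp (- (real j powr (2 * a)) + 1) \<le> real j powr (-2 * s) * exp (real j powr (2 * a))" .
      then show "(l j)\<^sup>2 / exp (- (real j powr (2 * a)) + 1) \<le> K * (real m powr (-2 * s) * exp (real m powr (2 * a)))"
        using K(2)[of j m] j by simp
    qed
    also have "\<dots> = K * (real m * real m powr (-2 * s)) * exp (real m powr (2 * a))" by simp
    also have "real m * real m powr (-2 * s) = real m powr (1 - 2 * s)"
      using m by (simp add: powr_diff powr_minus field_simps)
    finally show ?thesis .
  qed
  then show ?thesis using K(1) that by blast
qed

lemma exp_weight_term_ge:
  assumes "0 < a"
  obtains c where "0 < c"
    and "\<And>x m. 0 < x \<Longrightarrow> 1 \<le> m \<Longrightarrow> 2 * (- ln x) < real m powr (2 * a) \<Longrightarrow>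
           c \<le> x * ((l m)\<^sup>2 / exp (- (real m powr (2 * a)) + 1))"
proof -
  define \<alpha> where "\<alpha> = 2 * a"
  have \<alpha>: "0 < \<alpha>" using assms by (simp add: \<alpha>_def)
  obtain K where K: "0 < K" "\<And>u. 1 \<le> u \<Longrightarrow> u powr (2 * s) \<le> K * exp (1 / 2 * u powr \<alpha>)"
    using powr_le_const_mul_exp_powr[OF \<alpha>, of "1 / 2" "2 * s"] by auto
  have "1 / (exp 1 * K) \<le> x * ((l m)\<^sup>2 / exp (- (real m powr (2 * a)) + 1))"
    if x: "0 < x" and m: "1 \<le> m" and m_L: "2 * (- ln x) < real m powr (2 * a)" for x m
  proof -
    have "real m powr (2 * s) \<le> K * exp (1 / 2 * real m powr \<alpha>)" using K(2)[of "real m"] m by simp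
    then have K_m: "1 / K \<le> real m powr (-2 * s) * exp (1 / 2 * real m powr \<alpha>)"
      using K(1) m by (simp add: powr_minus divide_simps mult.commute)
    have "exp (1 / 2 * real m powr \<alpha>) \<le> x * exp (real m powr \<alpha>)"
    proof -
      have "x * exp (real m powr \<alpha>) = exp (real m powr \<alpha> - (- ln x))" using x by (simp add: exp_add)
      moreover have "1 / 2 * real m powr \<alpha> \<le> real m powr \<alpha> - (- ln x)" using m_L by (simp add: \<alpha>_def)
      ultimately show ?thesis by simp
    qed
    then have "1 / K \<le> real m powr (-2 * s) * (x * exp (real m powr \<alpha>))"
      using K_m by (meson order.trans mult_left_mono powr_ge_zero)
    then have "1 / K / exp 1 \<le> real m powr (-2 * s) * (x * exp (real m powr \<alpha>)) / exp 1"
      by (rule divide_right_mono) simp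
    also have "\<dots> = x * ((l m)\<^sup>2 / exp (- (real m powr (2 * a)) + 1))"
      unfolding exp_weight_term[OF m] by (simp add: \<alpha>_def)
    finally show ?thesis by (simp add: mult.commute)
  qed
  then show ?thesis using K(1) that[of "1 / (exp 1 * K)"] by simp
qed

lemma Rm_poly_exp_le:
  assumes "0 < a" "0 < 2 * p + 2 * s - 1"
  obtains C where "0 < C"
    and "\<And>x m. 0 < x \<Longrightarrow> 1 \<le> m \<Longrightarrow> real m powr (2 * a) \<le> - ln x / 2 \<Longrightarrow>
           Rm (\<lambda>j. real j powr (2 * p)) (\<lambda>j. exp (- (real j powr (2 * a)) + 1)) l m x
             \<le> C * real m powr (- (2 * p + 2 * s - 1))"
proof -
  define t where "t = 2 * p + 2 * s - 1"
  have t: "0 < t" using assms by (simp add: t_def)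
  obtain K where K: "0 < K" "\<And>m. 1 \<le> m \<Longrightarrow> (\<Sum>j=1..m. (l j)\<^sup>2 / exp (- (real j powr (2 * a)) + 1))
      \<le> K * real m powr (1 - 2 * s) * exp (real m powr (2 * a))"
    using exp_weighted_sum_le[OF assms(1)] by blast
  obtain K' where K': "0 < K'" "\<And>x m. 0 < x \<Longrightarrow> 1 \<le> m \<Longrightarrow> real m powr (2 * a) \<le> - ln x / 2 \<Longrightarrow>
      x * exp (real m powr (2 * a)) \<le> K' * real m powr (- (2 * p))"
    using mul_exp_powr_le_powr[of "2 * a"] assms(1) by auto
  have m_t: "real m powr (1 - 2 * s) * real m powr (- (2 * p)) = real m powr (-t)" for m
  proof -
    have "real m powr (1 - 2 * s) * real m powr (- (2 * p)) = real m powr (1 - 2 * s + - (2 * p))"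
      by (rule powr_add [symmetric])
    also have "1 - 2 * s + - (2 * p) = -t" by (simp add: t_def)
    finally show ?thesis .
  qed
  have "Rm (\<lambda>j. real j powr (2 * p)) (\<lambda>j. exp (- (real j powr (2 * a)) + 1)) l m x
      \<le> (1 / t + exp 1 * K + K * K') * real m powr (-t)"
    if x: "0 < x" and m: "1 \<le> m" and m_L: "real m powr (2 * a) \<le> - ln x / 2" for x m
  proof -
    define S where "S = (\<Sum>j=1..m. (l j)\<^sup>2 / exp (- (real j powr (2 * a)) + 1))"
    define E where "E = exp (real m powr (2 * a))"
    have S: "0 \<le> S" "S \<le> K * real m powr (1 - 2 * s) * E"
      using K(2)[OF m] by (auto simp: S_def E_def intro: sum_nonneg)
    have ratio: "exp (- (real m powr (2 * a)) + 1) / real m powr (2 * p) = exp 1 / (E * real m powr (2 * p))"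
    proof -
      have "exp (- (real m powr (2 * a)) + 1) = exp 1 / E" by (simp add: E_def exp_diff [symmetric])
      then show ?thesis by simp
    qed
    have "exp 1 / (E * real m powr (2 * p)) * S \<le> exp 1 / (E * real m powr (2 * p)) * (K * real m powr (1 - 2 * s) * E)"
      using S by (intro mult_left_mono) (auto simp: E_def)
    also have "\<dots> = exp 1 * K * (real m powr (1 - 2 * s) / real m powr (2 * p))"
      by (simp add: E_def)
    also have "real m powr (1 - 2 * s) / real m powr (2 * p) = real m powr (-t)"
      using m_t[of m] by (simp add: powr_minus divide_inverse)
    finally have ratio_S: "exp (- (real m powr (2 * a)) + 1) / real m powr (2 * p) * S \<le> exp 1 * K * real m powr (-t)"
      unfolding ratio .
    have xE: "x * E \<le> K' * real m powr (- (2 * p))" using K'(2)[OF x m m_L] by (simp add: E_def)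
    have "x * S \<le> x * (K * real m powr (1 - 2 * s) * E)"
      using S(2) x by (intro mult_left_mono) auto
    also have "\<dots> = K * real m powr (1 - 2 * s) * (x * E)" by (simp only: mult_ac)
    also have "\<dots> \<le> K * real m powr (1 - 2 * s) * (K' * real m powr (- (2 * p)))"
      using xE K(1) by (intro mult_left_mono) auto
    also have "\<dots> = K * K' * real m powr (-t)" using m_t[of m] by (simp only: mult_ac)
    finally have x_S: "x * S \<le> K * K' * real m powr (-t)" .
    have "max (exp (- (real m powr (2 * a)) + 1) / real m powr (2 * p)) x * S
        \<le> exp (- (real m powr (2 * a)) + 1) / real m powr (2 * p) * S + x * S"
      using S(1) x by (cases "exp (- (real m powr (2 * a)) + 1) / real m powr (2 * p) \<le> x") auto
    also have "\<dots> \<le> (exp 1 * K + K * K') * real m powr (-t)"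
      using ratio_S x_S by (simp add: distrib_right)
    finally have "Rm (\<lambda>j. real j powr (2 * p)) (\<lambda>j. exp (- (real j powr (2 * a)) + 1)) l m x
        \<le> max (real m powr (-t) / t) ((exp 1 * K + K * K') * real m powr (-t))"
      using poly_tail_bounds(2)[OF assms(2) m] unfolding S_def t_def by (intro Rm_le_maxI)
    also have "\<dots> \<le> (1 / t + exp 1 * K + K * K') * real m powr (-t)"
      using t K K' by (simp add: distrib_right add_increasing add_increasing2)
    finally show ?thesis .
  qed
  then show ?thesis using that[of "1 / t + exp 1 * K + K * K'"] t K K' by (simp add: t_def add_pos_pos)
qed

lemma Rstar_poly_exp_bigo:
  assumes "0 < a" "0 < 2 * p + 2 * s - 1"
  shows "Rstar (\<lambda>j. real j powr (2 * p)) (\<lambda>j. exp (- (real j powr (2 * a)) + 1)) l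
           \<in> O[at_right 0](\<lambda>x. (- ln x) powr (- (2 * p + 2 * s - 1) / (2 * a)))"
proof -
  define t \<alpha> where "t = 2 * p + 2 * s - 1" and "\<alpha> = 2 * a"
  have t: "0 < t" and \<alpha>: "0 < \<alpha>" using assms by (auto simp: t_def \<alpha>_def)
  obtain C where C: "0 < C" "\<And>x m. 0 < x \<Longrightarrow> 1 \<le> m \<Longrightarrow> real m powr \<alpha> \<le> - ln x / 2 \<Longrightarrow>
      Rm (\<lambda>j. real j powr (2 * p)) (\<lambda>j. exp (- (real j powr (2 * a)) + 1)) l m x \<le> C * real m powr (-t)"
    using Rm_poly_exp_le[OF assms] unfolding t_def \<alpha>_def by blast
  have "Rstar (\<lambda>j. real j powr (2 * p)) (\<lambda>j. exp (- (real j powr (2 * a)) + 1)) l x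
      \<le> C * 2 powr t * 2 powr (t / \<alpha>) * (- ln x) powr (-t / \<alpha>)"
    if x: "0 < x" "x \<le> exp (- (2 * 2 powr \<alpha>))" for x
  proof -
    define L where "L = - ln x"
    have L: "2 * 2 powr \<alpha> \<le> L" unfolding L_def by (rule le_neg_ln_if_le_exp[OF x])
    have L_pos: "0 < L" using L powr_gt_zero[of 2 \<alpha>] by linarith
    define w where "w = (L / 2) powr (1 / \<alpha>)"
    have w_\<alpha>: "w powr \<alpha> = L / 2" using \<alpha> L_pos by (simp add: w_def powr_powr)
    have "(2 powr \<alpha>) powr (1 / \<alpha>) \<le> w" using L \<alpha> unfolding w_def by (intro powr_mono2) auto
    then have w: "2 \<le> w" using \<alpha> by (simp add: powr_powr)
    define m where "m = nat \<lfloor>w\<rfloor>"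
    note m = nat_floor_bounds[OF w, folded m_def]
    have "real m powr \<alpha> \<le> L / 2" using m \<alpha> w_\<alpha> by (metis powr_mono2 less_imp_le of_nat_0_le_iff)
    then have "Rm (\<lambda>j. real j powr (2 * p)) (\<lambda>j. exp (- (real j powr (2 * a)) + 1)) l m x \<le> C * real m powr (-t)"
      using C(2)[OF x(1) m(1)] by (simp add: L_def)
    then have "Rstar (\<lambda>j. real j powr (2 * p)) (\<lambda>j. exp (- (real j powr (2 * a)) + 1)) l x \<le> C * real m powr (-t)"
      using Rstar_le_Rm[OF _ m(1)] by (meson order.trans powr_ge_zero)
    also have "\<dots> \<le> C * (w / 2) powr (-t)"
      using m t w C(1) by (intro mult_left_mono powr_mono2') auto
    also have "(w / 2) powr (-t) = 2 powr t * 2 powr (t / \<alpha>) * L powr (-t / \<alpha>)"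
    proof -
      have "(w / 2) powr (-t) = w powr (-t) / 2 powr (-t)" by (intro powr_divide)
      then have "(w / 2) powr (-t) = 2 powr t * w powr (-t)" by (simp add: powr_minus_divide)
      moreover have "w powr (-t) = (L / 2) powr (-t / \<alpha>)"
        unfolding w_def powr_powr by (intro arg_cong[where f="\<lambda>e. (L / 2) powr e"]) simp
      moreover have "(L / 2) powr (-t / \<alpha>) = L powr (-t / \<alpha>) / 2 powr (-t / \<alpha>)"
        by (intro powr_divide)
      moreover have "2 powr (-t / \<alpha>) = 1 / 2 powr (t / \<alpha>)"
        using powr_minus_divide[of 2 "t / \<alpha>"] by simp
      ultimately show ?thesis by simp
    qed
    finally show ?thesis by (simp add: L_def mult_ac)
  qed
  then show ?thesis
    unfolding t_def [symmetric] \<alpha>_def [symmetric]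
    by (intro bigo_at_right_0I[OF exp_gt_zero]) (auto intro: Rstar_nonneg)
qed

lemma Rstar_poly_exp_bigomega:
  assumes "0 < a" "0 < 2 * p + 2 * s - 1"
  shows "Rstar (\<lambda>j. real j powr (2 * p)) (\<lambda>j. exp (- (real j powr (2 * a)) + 1)) l
           \<in> \<Omega>[at_right 0](\<lambda>x. (- ln x) powr (- (2 * p + 2 * s - 1) / (2 * a)))"
proof -
  define t \<alpha> where "t = 2 * p + 2 * s - 1" and "\<alpha> = 2 * a"
  have t: "0 < t" and \<alpha>: "0 < \<alpha>" using assms by (auto simp: t_def \<alpha>_def)
  obtain c' where c': "0 < c'" "\<And>x m. 0 < x \<Longrightarrow> 1 \<le> m \<Longrightarrow> 2 * (- ln x) < real m powr \<alpha> \<Longrightarrow>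
      c' \<le> x * ((l m)\<^sup>2 / exp (- (real m powr (2 * a)) + 1))"
    using exp_weight_term_ge[OF assms(1)] unfolding \<alpha>_def by blast
  define c where "c = min (2 powr (- (t + 1)) * 2 powr (-t / \<alpha>)) c'"
  have "c * (- ln x) powr (-t / \<alpha>)
      \<le> Rm (\<lambda>j. real j powr (2 * p)) (\<lambda>j. exp (- (real j powr (2 * a)) + 1)) l m x"
    if x: "0 < x" "x \<le> exp (-1)" and m: "1 \<le> m" for x m
  proof -
    define L where "L = - ln x"
    have L: "1 \<le> L" unfolding L_def using le_neg_ln_if_le_exp[OF x] by simp
    have L_t: "L powr (-t / \<alpha>) \<le> 1" using powr_mono[of "-t / \<alpha>" 0 L] L t \<alpha> by simp
    show ?thesis
    proof (cases "real m powr \<alpha> \<le> 2 * L")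
      case True
      have "real m = (real m powr \<alpha>) powr (1 / \<alpha>)" using \<alpha> m by (simp add: powr_powr)
      also have "\<dots> \<le> (2 * L) powr (1 / \<alpha>)" using True \<alpha> by (intro powr_mono2) auto
      finally have "((2 * L) powr (1 / \<alpha>)) powr (-t) \<le> real m powr (-t)"
        using m t by (intro powr_mono2') auto
      also have "((2 * L) powr (1 / \<alpha>)) powr (-t) = 2 powr (-t / \<alpha>) * L powr (-t / \<alpha>)"
        unfolding powr_powr using L by (simp add: powr_mult)
      finally have "c * L powr (-t / \<alpha>) \<le> 2 powr (- (t + 1)) * real m powr (-t)"
        using L by (auto simp: c_def intro!: order.trans[OF mult_right_mono[OF min.cobounded1]])
      also have "\<dots> \<le> Rm (\<lambda>j. real j powr (2 * p)) (\<lambda>j. exp (- (real j powr (2 * a)) + 1)) l m x"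
        using order.trans[OF poly_tail_bounds(1)[OF assms(2) m]
            tail_le_Rm[of l "\<lambda>j. real j powr (2 * p)" m "\<lambda>j. exp (- (real j powr (2 * a)) + 1)" x]]
        by (simp add: t_def algebra_simps)
      finally show ?thesis by (simp add: L_def)
    next
      case False
      have "c' \<le> x * ((l m)\<^sup>2 / exp (- (real m powr (2 * a)) + 1))"
        using c'(2)[OF x(1) m] False by (simp add: L_def)
      also have "\<dots> \<le> x * (\<Sum>j=1..m. (l j)\<^sup>2 / exp (- (real j powr (2 * a)) + 1))"
        using m x by (intro mult_left_mono member_le_sum) auto
      also have "\<dots> \<le> Rm (\<lambda>j. real j powr (2 * p)) (\<lambda>j. exp (- (real j powr (2 * a)) + 1)) l m x"
        by (intro weighted_sum_le_Rm sum_nonneg) simp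
      finally have "c' \<le> Rm (\<lambda>j. real j powr (2 * p)) (\<lambda>j. exp (- (real j powr (2 * a)) + 1)) l m x" .
      moreover have "c * L powr (-t / \<alpha>) \<le> c * 1" using L_t c'(1) by (intro mult_left_mono) (auto simp: c_def)
      moreover have "c \<le> c'" by (simp add: c_def)
      ultimately show ?thesis by (simp add: L_def)
    qed
  qed
  moreover have "0 < c" using c'(1) by (simp add: c_def)
  ultimately show ?thesis
    unfolding t_def [symmetric] \<alpha>_def [symmetric]
    by (intro bigomega_at_right_0I[OF exp_gt_zero[of "-1"]]) (auto intro: le_RstarI)
qed

end

section \<open>Exponential ellipsoid, polynomial covariance\<close>

context power_functional
begin

lemma exp_tail_le:
  assumes "0 < p"
  obtains K where "0 < K"
    and "\<And>x m. 0 < x \<Longrightarrow> 1 \<le> m \<Longrightarrow> 2 * (- ln x) \<le> real m powr (2 * p) \<Longrightarrow>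
           (\<Sum>\<^sub>\<infinity>j\<in>{m<..}. (l j)\<^sup>2 / exp (real j powr (2 * p) - 1)) \<le> K * x"
proof -
  obtain K where K: "0 < K" "\<And>u. 1 \<le> u \<Longrightarrow> u powr (2 - 2 * s) \<le> K * exp (1 / 2 * u powr (2 * p))"
    using powr_le_const_mul_exp_powr[of "2 * p" "1 / 2" "2 - 2 * s"] assms by auto
  have "(\<Sum>\<^sub>\<infinity>j\<in>{m<..}. (l j)\<^sup>2 / exp (real j powr (2 * p) - 1)) \<le> exp 1 * K * x"
    if x: "0 < x" and m: "1 \<le> m" and m_L: "2 * (- ln x) \<le> real m powr (2 * p)" for x m
  proof (rule infsum_greaterThan_le_bound(2))
    have term_le: "(l j)\<^sup>2 / exp (real j powr (2 * p) - 1) \<le> exp 1 * K * x * real j powr (-2)" if j: "m < j" for j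
    proof -
      define E where "E = exp (1 / 2 * real j powr (2 * p))"
      have j1: "1 \<le> j" using j m by simp
      have E_pos: "0 < E" by (simp add: E_def)
      have "real m powr (2 * p) \<le> real j powr (2 * p)" using j m assms by (intro powr_mono2) auto
      then have "exp (- ln x) \<le> E" using m_L by (simp add: E_def)
      then have E_x: "inverse E \<le> x" using x E_pos by (simp add: exp_minus field_simps)
      have \<beta>: "exp (real j powr (2 * p) - 1) = E * E / exp 1" by (simp add: E_def exp_diff mult_exp_exp)
      have l: "(l j)\<^sup>2 = real j powr (2 - 2 * s) * real j powr (-2)"
        using j1 by (simp add: l_squared powr_add [symmetric])
      have "(l j)\<^sup>2 / exp (real j powr (2 * p) - 1)
          = exp 1 * real j powr (2 - 2 * s) * real j powr (-2) * inverse E * inverse E"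
        unfolding \<beta> l using E_pos by (simp add: field_simps)
      also have "\<dots> \<le> exp 1 * (K * E) * real j powr (-2) * inverse E * inverse E"
        using K(2)[of "real j"] j1 by (intro mult_right_mono) (auto simp: E_def)
      also have "\<dots> = exp 1 * K * real j powr (-2) * inverse E"
        by (simp add: E_def field_simps)
      also have "\<dots> \<le> exp 1 * K * real j powr (-2) * x"
        using E_x K(1) by (intro mult_left_mono) auto
      finally show ?thesis by (simp only: mult_ac)
    qed
    fix N
    have "(\<Sum>j\<in>{m<..N}. (l j)\<^sup>2 / exp (real j powr (2 * p) - 1)) \<le> (\<Sum>j\<in>{m<..N}. exp 1 * K * x * real j powr (-2))"
      using term_le by (intro sum_mono) auto
    also have "\<dots> = exp 1 * K * x * (\<Sum>j\<in>{m<..N}. real j powr (-2))" by (simp add: sum_distrib_left)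
    also have "\<dots> \<le> exp 1 * K * x * 1"
    proof (intro mult_left_mono)
      have "(\<Sum>j\<in>{m<..N}. real j powr (-2)) \<le> real m powr (1 - 2) / (2 - 1)"
        using powr_tail_sum_le[of 2 m N] m by simp
      also have "\<dots> \<le> 1" using m by (simp add: powr_minus_divide)
      finally show "(\<Sum>j\<in>{m<..N}. real j powr (-2)) \<le> 1" .
    qed (use K(1) x in simp)
    finally show "(\<Sum>j\<in>{m<..N}. (l j)\<^sup>2 / exp (real j powr (2 * p) - 1)) \<le> exp 1 * K * x" by simp
  qed simp
  then show ?thesis using K(1) that[of "exp 1 * K"] by simp
qed

lemma Rstar_exp_poly_le:
  assumes "0 < p" "0 < a"
  obtains K where "0 < K"
    and "\<And>x m. 0 < x \<Longrightarrow> x \<le> exp (-1) \<Longrightarrow> 1 \<le> m \<Longrightarrow> 2 * (- ln x) \<le> real m powr (2 * p) \<Longrightarrow>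
           Rstar (\<lambda>j. exp (real j powr (2 * p) - 1)) (\<lambda>j. real j powr (-2 * a)) l x
             \<le> x * (K + (\<Sum>j=1..m. real j powr (2 * a - 2 * s)))"
proof -
  obtain K where K: "0 < K" "\<And>x m. 0 < x \<Longrightarrow> 1 \<le> m \<Longrightarrow> 2 * (- ln x) \<le> real m powr (2 * p) \<Longrightarrow>
      (\<Sum>\<^sub>\<infinity>j\<in>{m<..}. (l j)\<^sup>2 / exp (real j powr (2 * p) - 1)) \<le> K * x"
    using exp_tail_le[OF assms(1)] by blast
  have "Rstar (\<lambda>j. exp (real j powr (2 * p) - 1)) (\<lambda>j. real j powr (-2 * a)) l x
      \<le> x * (K + (\<Sum>j=1..m. real j powr (2 * a - 2 * s)))"
    if x: "0 < x" "x \<le> exp (-1)" and m: "1 \<le> m" and m_L: "2 * (- ln x) \<le> real m powr (2 * p)" for x m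
  proof -
    define L where "L = - ln x"
    have L: "1 \<le> L" unfolding L_def using le_neg_ln_if_le_exp[OF x] by simp
    have "real m powr (-2 * a) \<le> real m powr 0" using m assms(2) by (intro powr_mono) auto
    then have "real m powr (-2 * a) / exp (real m powr (2 * p) - 1) \<le> 1 / exp (real m powr (2 * p) - 1)"
      using m by (intro divide_right_mono) auto
    also have "\<dots> \<le> 1 / exp L" using m_L L by (intro divide_left_mono) (auto simp: L_def)
    also have "1 / exp L = x" using x by (simp add: L_def exp_minus divide_inverse)
    finally have "max (real m powr (-2 * a) / exp (real m powr (2 * p) - 1)) x = x" by simp
    then have "max (real m powr (-2 * a) / exp (real m powr (2 * p) - 1)) x * (\<Sum>j=1..m. (l j)\<^sup>2 / real j powr (-2 * a))
        = x * (\<Sum>j=1..m. real j powr (2 * a - 2 * s))"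
      unfolding poly_weighted_sum by simp
    then have "Rm (\<lambda>j. exp (real j powr (2 * p) - 1)) (\<lambda>j. real j powr (-2 * a)) l m x
        \<le> max (K * x) (x * (\<Sum>j=1..m. real j powr (2 * a - 2 * s)))"
      using K(2)[OF x(1) m m_L] by (intro Rm_le_maxI) auto
    also have "\<dots> \<le> x * (K + (\<Sum>j=1..m. real j powr (2 * a - 2 * s)))"
      using x K(1) one_le_powr_partial_sum[OF m, of "2 * a - 2 * s"] by (simp add: algebra_simps)
    finally show ?thesis using Rstar_le_Rm[OF _ m] by (meson order.trans exp_ge_zero)
  qed
  then show ?thesis using K(1) that by blast
qed

lemma Rm_exp_poly_ge_small:
  assumes "0 < p" "0 < a" "0 \<le> k"
  obtains c where "0 < c"
    and "\<And>x m. 0 < x \<Longrightarrow> x \<le> exp (-1) \<Longrightarrow> 1 \<le> m \<Longrightarrow> real m powr (2 * p) < - ln x / 2 \<Longrightarrow>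
           c * (x * (- ln x) powr k) \<le> Rm (\<lambda>j. exp (real j powr (2 * p) - 1)) (\<lambda>j. real j powr (-2 * a)) l m x"
proof -
  \<comment> \<open>Below the balancing index \<open>\<gamma>\<^sub>m/\<beta>\<^sub>m \<ge> L powr (-a/p) * exp (-L/2)\<close> with \<open>L = - ln x\<close>,
    which alone beats \<open>x * L powr k = exp (-L) * L powr k\<close>.\<close>
  obtain C where C: "0 < C" "\<And>u. 1 \<le> u \<Longrightarrow> u powr (k + a / p) \<le> C * exp (1 / 2 * u powr 1)"
    using powr_le_const_mul_exp_powr[of 1 "1 / 2" "k + a / p"] by auto
  have "1 / C * (x * (- ln x) powr k) \<le> Rm (\<lambda>j. exp (real j powr (2 * p) - 1)) (\<lambda>j. real j powr (-2 * a)) l m x"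
    if x: "0 < x" "x \<le> exp (-1)" and m: "1 \<le> m" and m_L: "real m powr (2 * p) < - ln x / 2" for x m
  proof -
    define L where "L = - ln x"
    have L: "1 \<le> L" unfolding L_def using le_neg_ln_if_le_exp[OF x] by simp
    have "L powr (-a / p) \<le> (L / 2) powr (-a / p)"
      using L assms by (intro powr_mono2') (auto simp: divide_nonneg_nonneg)
    also have "\<dots> \<le> (real m powr (2 * p)) powr (-a / p)"
      using m_L m assms by (intro powr_mono2') (auto simp: L_def divide_nonneg_nonneg)
    also have "\<dots> = real m powr (-2 * a)"
      unfolding powr_powr using assms by (intro arg_cong[where f="\<lambda>e. real m powr e"]) simp
    finally have m_\<gamma>: "L powr (-a / p) \<le> real m powr (-2 * a)" .
    have "1 / exp (real m powr (2 * p) - 1) = exp (1 - real m powr (2 * p))" by (simp add: exp_diff)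
    then have m_\<beta>: "exp (- (L / 2)) \<le> 1 / exp (real m powr (2 * p) - 1)" using m_L by (simp add: L_def)
    have "L powr (-a / p) * exp (- (L / 2)) \<le> real m powr (-2 * a) * (1 / exp (real m powr (2 * p) - 1))"
      using m_\<gamma> m_\<beta> by (intro mult_mono) auto
    also have "\<dots> = real m powr (-2 * a) / exp (real m powr (2 * p) - 1) * 1" by simp
    also have "\<dots> \<le> real m powr (-2 * a) / exp (real m powr (2 * p) - 1) * (\<Sum>j=1..m. (l j)\<^sup>2 / real j powr (-2 * a))"
      unfolding poly_weighted_sum by (intro mult_left_mono one_le_powr_partial_sum[OF m]) simp
    also have "\<dots> \<le> Rm (\<lambda>j. exp (real j powr (2 * p) - 1)) (\<lambda>j. real j powr (-2 * a)) l m x"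
      by (intro weighted_sum_le_Rm(2)) (simp add: poly_weighted_sum sum_nonneg)
    finally have Rm_ge: "L powr (-a / p) * exp (- (L / 2)) \<le> Rm (\<lambda>j. exp (real j powr (2 * p) - 1)) (\<lambda>j. real j powr (-2 * a)) l m x" .
    have L_pos: "0 < L" using L by simp
    have C_L: "L powr (k + a / p) \<le> C * exp (L / 2)" using C(2)[OF L] L_pos by simp
    have "x * L powr k = exp (-L) * (L powr (k + a / p) * L powr (-a / p))"
      using x L_pos by (simp add: L_def powr_add [symmetric])
    also have "\<dots> \<le> exp (-L) * (C * exp (L / 2) * L powr (-a / p))"
      using C_L by (intro mult_left_mono mult_right_mono) auto
    also have "\<dots> = C * (L powr (-a / p) * (exp (-L) * exp (L / 2)))" by (simp only: mult_ac)
    also have "exp (-L) * exp (L / 2) = exp (- (L / 2))" by (simp add: mult_exp_exp)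
    finally have "x * L powr k \<le> C * (L powr (-a / p) * exp (- (L / 2)))" .
    also have "\<dots> \<le> C * Rm (\<lambda>j. exp (real j powr (2 * p) - 1)) (\<lambda>j. real j powr (-2 * a)) l m x"
      using Rm_ge C(1) by (intro mult_left_mono) auto
    finally show ?thesis using C(1) by (simp add: L_def pos_divide_le_eq mult.commute)
  qed
  then show ?thesis using C(1) that[of "1 / C"] by simp
qed

lemma Rstar_exp_poly_regular_bigo:
  assumes "0 < p" "0 < a" "-1 < 2 * a - 2 * s"
  shows "Rstar (\<lambda>j. exp (real j powr (2 * p) - 1)) (\<lambda>j. real j powr (-2 * a)) l
           \<in> O[at_right 0](\<lambda>x. x * (- ln x) powr ((2 * a - 2 * s + 1) / (2 * p)))"
proof -
  define r \<kappa> where "r = 2 * a - 2 * s" and "\<kappa> = (2 * a - 2 * s + 1) / (2 * p)"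
  have r: "-1 < r" and \<kappa>: "0 < \<kappa>" using assms by (auto simp: r_def \<kappa>_def)
  obtain K where K: "0 < K" "\<And>x m. 0 < x \<Longrightarrow> x \<le> exp (-1) \<Longrightarrow> 1 \<le> m \<Longrightarrow> 2 * (- ln x) \<le> real m powr (2 * p) \<Longrightarrow>
      Rstar (\<lambda>j. exp (real j powr (2 * p) - 1)) (\<lambda>j. real j powr (-2 * a)) l x \<le> x * (K + (\<Sum>j=1..m. real j powr r))"
    using Rstar_exp_poly_le[OF assms(1,2)] unfolding r_def by blast
  define K' where "K' = max 1 (1 / (r + 1))"
  have "Rstar (\<lambda>j. exp (real j powr (2 * p) - 1)) (\<lambda>j. real j powr (-2 * a)) l x
      \<le> (K + K' * 2 powr (r + 1) * 2 powr \<kappa>) * (x * (- ln x) powr \<kappa>)"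
    if x: "0 < x" "x \<le> exp (-1)" for x
  proof -
    define L where "L = - ln x"
    have L: "1 \<le> L" unfolding L_def using le_neg_ln_if_le_exp[OF x] by simp
    obtain m where m: "1 \<le> m" "2 * L \<le> real m powr (2 * p)" "real m \<le> 2 * (2 * L) powr (1 / (2 * p))"
      using obtain_nat_powr_ge[of "2 * L" "2 * p"] L assms(1) by auto
    have "(\<Sum>j=1..m. real j powr r) \<le> K' * real m powr (r + 1)"
      using powr_partial_sum_bounds(2)[OF r m(1)] by (simp add: K'_def)
    also have "\<dots> \<le> K' * (2 * (2 * L) powr (1 / (2 * p))) powr (r + 1)"
      using m r by (intro mult_left_mono powr_mono2) (auto simp: K'_def)
    also have "(2 * (2 * L) powr (1 / (2 * p))) powr (r + 1) = 2 powr (r + 1) * 2 powr \<kappa> * L powr \<kappa>"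
      using L assms(1) by (simp add: powr_mult powr_powr \<kappa>_def r_def)
    finally have "(\<Sum>j=1..m. real j powr r) \<le> K' * 2 powr (r + 1) * 2 powr \<kappa> * L powr \<kappa>" by (simp add: mult_ac)
    moreover have "K \<le> K * L powr \<kappa>" using K(1) L \<kappa> by (simp add: ge_one_powr_ge_zero)
    ultimately have "K + (\<Sum>j=1..m. real j powr r) \<le> (K + K' * 2 powr (r + 1) * 2 powr \<kappa>) * L powr \<kappa>"
      by (simp add: algebra_simps)
    then have "x * (K + (\<Sum>j=1..m. real j powr r)) \<le> x * ((K + K' * 2 powr (r + 1) * 2 powr \<kappa>) * L powr \<kappa>)"
      using x by (intro mult_left_mono) auto
    then show ?thesis using K(2)[OF x m(1)] m(2) by (simp add: L_def mult_ac)
  qed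
  then show ?thesis
    unfolding \<kappa>_def [symmetric]
    by (intro bigo_at_right_0I[OF exp_gt_zero[of "-1"]]) (auto intro: Rstar_nonneg)
qed

lemma Rstar_exp_poly_regular_bigomega:
  assumes "0 < p" "0 < a" "-1 < 2 * a - 2 * s"
  shows "Rstar (\<lambda>j. exp (real j powr (2 * p) - 1)) (\<lambda>j. real j powr (-2 * a)) l
           \<in> \<Omega>[at_right 0](\<lambda>x. x * (- ln x) powr ((2 * a - 2 * s + 1) / (2 * p)))"
proof -
  define r \<kappa> where "r = 2 * a - 2 * s" and "\<kappa> = (2 * a - 2 * s + 1) / (2 * p)"
  have r: "-1 < r" and \<kappa>: "0 < \<kappa>" using assms by (auto simp: r_def \<kappa>_def)
  obtain c where c: "0 < c" "\<And>x m. 0 < x \<Longrightarrow> x \<le> exp (-1) \<Longrightarrow> 1 \<le> m \<Longrightarrow> real m powr (2 * p) < - ln x / 2 \<Longrightarrow>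
      c * (x * (- ln x) powr \<kappa>) \<le> Rm (\<lambda>j. exp (real j powr (2 * p) - 1)) (\<lambda>j. real j powr (-2 * a)) l m x"
    using Rm_exp_poly_ge_small[OF assms(1,2) less_imp_le[OF \<kappa>]] by blast
  define k where "k = min 1 (1 / (r + 1))"
  have k: "0 < k" using r by (simp add: k_def)
  have "min c (k * 2 powr (-\<kappa>)) * (x * (- ln x) powr \<kappa>)
      \<le> Rm (\<lambda>j. exp (real j powr (2 * p) - 1)) (\<lambda>j. real j powr (-2 * a)) l m x"
    if x: "0 < x" "x \<le> exp (-1)" and m: "1 \<le> m" for x m
  proof (cases "real m powr (2 * p) < - ln x / 2")
    case True
    have "min c (k * 2 powr (-\<kappa>)) * (x * (- ln x) powr \<kappa>) \<le> c * (x * (- ln x) powr \<kappa>)"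
      using x by (intro mult_right_mono) auto
    also have "\<dots> \<le> Rm (\<lambda>j. exp (real j powr (2 * p) - 1)) (\<lambda>j. real j powr (-2 * a)) l m x"
      using c(2)[OF x m True] .
    finally show ?thesis .
  next
    case False
    define L where "L = - ln x"
    have L: "1 \<le> L" unfolding L_def using le_neg_ln_if_le_exp[OF x] by simp
    have "(L / 2) powr (1 / (2 * p)) \<le> (real m powr (2 * p)) powr (1 / (2 * p))"
      using False L assms(1) by (intro powr_mono2) (auto simp: L_def)
    also have "\<dots> = real m" using assms(1) m by (simp add: powr_powr)
    finally have "((L / 2) powr (1 / (2 * p))) powr (r + 1) \<le> real m powr (r + 1)"
      using r by (intro powr_mono2) auto
    moreover have "((L / 2) powr (1 / (2 * p))) powr (r + 1) = 2 powr (-\<kappa>) * L powr \<kappa>"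
      using L assms(1) by (simp add: powr_powr powr_divide powr_minus_divide \<kappa>_def r_def)
    ultimately have m_L: "2 powr (-\<kappa>) * L powr \<kappa> \<le> real m powr (r + 1)" by simp
    have "min c (k * 2 powr (-\<kappa>)) * (x * L powr \<kappa>) \<le> k * 2 powr (-\<kappa>) * (x * L powr \<kappa>)"
      using x by (intro mult_right_mono) auto
    also have "\<dots> = x * (k * (2 powr (-\<kappa>) * L powr \<kappa>))" by (simp only: mult_ac)
    also have "\<dots> \<le> x * (k * real m powr (r + 1))"
      using m_L x k by (intro mult_left_mono) auto
    also have "\<dots> \<le> x * (\<Sum>j=1..m. real j powr r)"
      using powr_partial_sum_bounds(1)[OF r m] x by (intro mult_left_mono) (auto simp: k_def)
    also have "\<dots> \<le> Rm (\<lambda>j. exp (real j powr (2 * p) - 1)) (\<lambda>j. real j powr (-2 * a)) l m x"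
      using weighted_sum_le_Rm(1)[of l "\<lambda>j. real j powr (-2 * a)" m x] unfolding poly_weighted_sum r_def
      by (simp add: sum_nonneg)
    finally show ?thesis by (simp add: L_def)
  qed
  moreover have "0 < min c (k * 2 powr (-\<kappa>))" using c k by simp
  ultimately show ?thesis
    unfolding \<kappa>_def [symmetric]
    by (intro bigomega_at_right_0I[OF exp_gt_zero[of "-1"], where c="min c (k * 2 powr (-\<kappa>))"])
      (auto intro: le_RstarI)
qed

lemma Rstar_exp_poly_critical_bigo:
  assumes "0 < p" "0 < a" "2 * a - 2 * s = -1"
  shows "Rstar (\<lambda>j. exp (real j powr (2 * p) - 1)) (\<lambda>j. real j powr (-2 * a)) l
           \<in> O[at_right 0](\<lambda>x. x * ln (- ln x))"
proof -
  obtain K where K: "0 < K" "\<And>x m. 0 < x \<Longrightarrow> x \<le> exp (-1) \<Longrightarrow> 1 \<le> m \<Longrightarrow> 2 * (- ln x) \<le> real m powr (2 * p) \<Longrightarrow>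
      Rstar (\<lambda>j. exp (real j powr (2 * p) - 1)) (\<lambda>j. real j powr (-2 * a)) l x \<le> x * (K + (\<Sum>j=1..m. real j powr (-1)))"
    using Rstar_exp_poly_le[OF assms(1,2)] unfolding assms(3) by blast
  have "Rstar (\<lambda>j. exp (real j powr (2 * p) - 1)) (\<lambda>j. real j powr (-2 * a)) l x
      \<le> (K + 1 + 1 / p) * (x * ln (- ln x))"
    if x: "0 < x" "x \<le> exp (- exp 2)" for x
  proof -
    define L where "L = - ln x"
    have "exp 2 \<le> L" unfolding L_def using le_neg_ln_if_le_exp[OF x] .
    moreover have L: "0 < L" using \<open>exp 2 \<le> L\<close> exp_gt_zero[of 2] by linarith
    ultimately have "ln (exp 2) \<le> ln L" by (subst ln_le_cancel_iff) auto
    then have ln_L: "2 \<le> ln L" by simp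
    have L1: "1 \<le> L" using \<open>exp 2 \<le> L\<close> by (rule order.trans[rotated]) simp
    have x1: "x \<le> exp (-1)" using x(2) by (rule order.trans) simp
    obtain m where m: "1 \<le> m" "2 * L \<le> real m powr (2 * p)" "real m \<le> 2 * (2 * L) powr (1 / (2 * p))"
      using obtain_nat_powr_ge[of "2 * L" "2 * p"] L1 assms(1) by auto
    have ln2: "ln 2 \<le> (1::real)" using ln_le_minus_one[of 2] by simp
    have "ln (real m) \<le> ln (2 * (2 * L) powr (1 / (2 * p)))" using m L by (subst ln_le_cancel_iff) auto
    also have "\<dots> = ln 2 + (ln 2 + ln L) / (2 * p)" using L assms(1) by (simp add: ln_mult ln_powr)
    also have "\<dots> \<le> 1 + (2 * ln L) / (2 * p)"
      using ln2 ln_L assms(1) by (intro add_mono divide_right_mono) auto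
    finally have "(\<Sum>j=1..m. real j powr (-1)) \<le> 2 + ln L / p"
      using harmonic_partial_sum_bounds(2)[OF m(1)] assms(1) by simp
    then have "K + (\<Sum>j=1..m. real j powr (-1)) \<le> (K + 1 + 1 / p) * ln L"
      using ln_L K(1) assms(1) by (simp add: algebra_simps) (smt (verit) mult_le_cancel_left1 divide_nonneg_nonneg)
    then have "x * (K + (\<Sum>j=1..m. real j powr (-1))) \<le> (K + 1 + 1 / p) * (x * ln L)"
      using x by (simp add: mult_left_mono mult.left_commute)
    then show ?thesis using K(2)[OF x(1) x1 m(1)] m(2) by (simp add: L_def)
  qed
  then show ?thesis by (intro bigo_at_right_0I[OF exp_gt_zero]) (auto intro: Rstar_nonneg)
qed

lemma Rstar_exp_poly_critical_bigomega:
  assumes "0 < p" "0 < a" "2 * a - 2 * s = -1"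
  shows "Rstar (\<lambda>j. exp (real j powr (2 * p) - 1)) (\<lambda>j. real j powr (-2 * a)) l
           \<in> \<Omega>[at_right 0](\<lambda>x. x * ln (- ln x))"
proof -
  obtain c where c: "0 < c" "\<And>x m. 0 < x \<Longrightarrow> x \<le> exp (-1) \<Longrightarrow> 1 \<le> m \<Longrightarrow> real m powr (2 * p) < - ln x / 2 \<Longrightarrow>
      c * (x * (- ln x) powr 1) \<le> Rm (\<lambda>j. exp (real j powr (2 * p) - 1)) (\<lambda>j. real j powr (-2 * a)) l m x"
    using Rm_exp_poly_ge_small[OF assms(1,2), of 1] by auto
  have "min c (1 / (4 * p)) * (x * ln (- ln x))
      \<le> Rm (\<lambda>j. exp (real j powr (2 * p) - 1)) (\<lambda>j. real j powr (-2 * a)) l m x"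
    if x: "0 < x" "x \<le> exp (- exp 2)" and m: "1 \<le> m" for x m
  proof -
    define L where "L = - ln x"
    have "exp 2 \<le> L" unfolding L_def using le_neg_ln_if_le_exp[OF x] .
    moreover have L: "0 < L" using \<open>exp 2 \<le> L\<close> exp_gt_zero[of 2] by linarith
    ultimately have "ln (exp 2) \<le> ln L" by (subst ln_le_cancel_iff) auto
    then have ln_L: "2 \<le> ln L" by simp
    have x1: "x \<le> exp (-1)" using x(2) by (rule order.trans) simp
    have x_ln_L: "0 \<le> x * ln L" using x ln_L by simp
    show ?thesis
    proof (cases "real m powr (2 * p) < L / 2")
      case True
      have "ln L \<le> L" using ln_le_minus_one[of L] L by simp
      then have "min c (1 / (4 * p)) * (x * ln L) \<le> c * (x * L)"
        using x_ln_L ln_L x c(1) by (intro mult_mono) auto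
      also have "\<dots> \<le> Rm (\<lambda>j. exp (real j powr (2 * p) - 1)) (\<lambda>j. real j powr (-2 * a)) l m x"
        using c(2)[OF x(1) x1 m] True L by (simp add: L_def)
      finally show ?thesis by (simp add: L_def)
    next
      case False
      have "L / 2 \<le> real m powr (2 * p)" using False by simp
      then have "ln (L / 2) \<le> ln (real m powr (2 * p))" using L m by (subst ln_le_cancel_iff) auto
      then have "ln L - ln 2 \<le> 2 * p * ln (real m)" using L m by (simp add: ln_div ln_powr)
      then have "ln L / 2 \<le> 2 * p * ln (real m)"
        using ln_L ln_le_minus_one[of 2] by simp
      then have "ln L / (4 * p) \<le> ln (real m)" using assms(1) by (simp add: field_simps)
      also have "\<dots> \<le> ln (real m + 1)" using m by simp
      also have "\<dots> \<le> (\<Sum>j=1..m. real j powr (-1))" by (rule harmonic_partial_sum_bounds(1)[OF m])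
      finally have sum_ge: "ln L / (4 * p) \<le> (\<Sum>j=1..m. real j powr (-1))" .
      have "min c (1 / (4 * p)) * (x * ln L) \<le> 1 / (4 * p) * (x * ln L)"
        using x_ln_L by (intro mult_right_mono) auto
      also have "\<dots> = x * (ln L / (4 * p))" by simp
      also have "\<dots> \<le> x * (\<Sum>j=1..m. real j powr (-1))"
        using sum_ge x by (intro mult_left_mono) auto
      also have "\<dots> \<le> Rm (\<lambda>j. exp (real j powr (2 * p) - 1)) (\<lambda>j. real j powr (-2 * a)) l m x"
        using weighted_sum_le_Rm(1)[of l "\<lambda>j. real j powr (-2 * a)" m x]
        unfolding poly_weighted_sum assms(3) by (simp add: sum_nonneg)
      finally show ?thesis by (simp add: L_def)
    qed
  qed
  moreover have "0 < min c (1 / (4 * p))" using c(1) assms(1) by simp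
  moreover have "0 \<le> x * ln (- ln x)" if "0 < x" "x \<le> exp (- exp 2)" for x :: real
  proof -
    have "exp 2 \<le> - ln x" using le_neg_ln_if_le_exp[OF that] .
    then have "1 \<le> - ln x" by (rule order.trans[rotated]) simp
    then show ?thesis using that by simp
  qed
  ultimately show ?thesis
    by (intro bigomega_at_right_0I[OF exp_gt_zero, where c="min c (1 / (4 * p))"]) (auto intro: le_RstarI)
qed

lemma Rstar_exp_poly_smooth_bigtheta:
  assumes "0 < p" "0 < a" "2 * a - 2 * s < -1"
  shows "Rstar (\<lambda>j. exp (real j powr (2 * p) - 1)) (\<lambda>j. real j powr (-2 * a)) l \<in> \<Theta>[at_right 0](\<lambda>x. x)"
proof -
  define r where "r = 2 * a - 2 * s"
  have r: "r < -1" using assms by (simp add: r_def)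
  obtain K where K: "0 < K" "\<And>x m. 0 < x \<Longrightarrow> x \<le> exp (-1) \<Longrightarrow> 1 \<le> m \<Longrightarrow> 2 * (- ln x) \<le> real m powr (2 * p) \<Longrightarrow>
      Rstar (\<lambda>j. exp (real j powr (2 * p) - 1)) (\<lambda>j. real j powr (-2 * a)) l x \<le> x * (K + (\<Sum>j=1..m. real j powr r))"
    using Rstar_exp_poly_le[OF assms(1,2)] unfolding r_def by blast
  have upper: "Rstar (\<lambda>j. exp (real j powr (2 * p) - 1)) (\<lambda>j. real j powr (-2 * a)) l x
      \<le> (K + 1 + 1 / (-r - 1)) * x" if x: "0 < x" "x \<le> exp (-1)" for x
  proof -
    have "1 \<le> 2 * (- ln x)" using le_neg_ln_if_le_exp[OF x] by simp
    then obtain m where m: "1 \<le> m" "2 * (- ln x) \<le> real m powr (2 * p)"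
      using obtain_nat_powr_ge[of "2 * (- ln x)" "2 * p"] assms(1) by auto
    have "x * (K + (\<Sum>j=1..m. real j powr r)) \<le> x * (K + (1 + 1 / (-r - 1)))"
      using convergent_powr_partial_sum_le[OF r m(1)] x by (intro mult_left_mono) auto
    then show ?thesis using K(2)[OF x m] by (simp add: algebra_simps)
  qed
  have lower: "x \<le> Rstar (\<lambda>j. exp (real j powr (2 * p) - 1)) (\<lambda>j. real j powr (-2 * a)) l x"
    if x: "0 < x" for x
  proof (rule le_RstarI)
    fix m :: nat assume m: "1 \<le> m"
    have "x * 1 \<le> x * (\<Sum>j=1..m. real j powr r)"
      using one_le_powr_partial_sum[OF m] x by (intro mult_left_mono) auto
    also have "\<dots> \<le> Rm (\<lambda>j. exp (real j powr (2 * p) - 1)) (\<lambda>j. real j powr (-2 * a)) l m x"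
      using weighted_sum_le_Rm(1)[of l "\<lambda>j. real j powr (-2 * a)" m x]
      unfolding poly_weighted_sum r_def by (simp add: sum_nonneg)
    finally show "x \<le> Rm (\<lambda>j. exp (real j powr (2 * p) - 1)) (\<lambda>j. real j powr (-2 * a)) l m x" by simp
  qed
  show ?thesis
  proof (intro bigthetaI bigo_at_right_0I[OF exp_gt_zero[of "-1"]]
      bigomega_at_right_0I[OF exp_gt_zero[of "-1"] zero_less_one])
  qed (use upper lower Rstar_nonneg in auto)
qed

end

section \<open>Rates at the level x = (1 + log n) / n\<close>

context power_functional
begin

lemma Rstar_poly_poly_sample_rates:
  assumes "0 < p" "0 < a" "1/2 - p < s"
  shows "s - a < 1/2 \<Longrightarrow> (\<lambda>n::nat. Rstar (\<lambda>j. real j powr (2 * p)) (\<lambda>j. real j powr (-2 * a)) l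
           ((1 + ln (real n)) / real n)) \<in> \<Theta>(\<lambda>n. (ln (real n) / real n) powr ((2 * p + 2 * s - 1) / (2 * p + 2 * a)))"
    and "s - a = 1/2 \<Longrightarrow> (\<lambda>n::nat. Rstar (\<lambda>j. real j powr (2 * p)) (\<lambda>j. real j powr (-2 * a)) l
           ((1 + ln (real n)) / real n)) \<in> \<Theta>(\<lambda>n. (ln (real n))\<^sup>2 / real n)"
    and "1/2 < s - a \<Longrightarrow> (\<lambda>n::nat. Rstar (\<lambda>j. real j powr (2 * p)) (\<lambda>j. real j powr (-2 * a)) l
           ((1 + ln (real n)) / real n)) \<in> \<Theta>(\<lambda>n. ln (real n) / real n)"
proof -
  show "(\<lambda>n::nat. Rstar (\<lambda>j. real j powr (2 * p)) (\<lambda>j. real j powr (-2 * a)) l ((1 + ln (real n)) / real n))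
      \<in> \<Theta>(\<lambda>n. (ln (real n) / real n) powr ((2 * p + 2 * s - 1) / (2 * p + 2 * a)))" if "s - a < 1/2"
  proof (rule bigtheta_at_sample_level)
    show "Rstar (\<lambda>j. real j powr (2 * p)) (\<lambda>j. real j powr (-2 * a)) l
        \<in> \<Theta>[at_right 0](\<lambda>x. x powr ((2 * p + 2 * s - 1) / (2 * p + 2 * a)))"
      using assms that by (intro bigthetaI Rstar_poly_poly_regular_bigo Rstar_poly_poly_regular_bigomega) auto
  qed real_asymp
  show "(\<lambda>n::nat. Rstar (\<lambda>j. real j powr (2 * p)) (\<lambda>j. real j powr (-2 * a)) l ((1 + ln (real n)) / real n))
      \<in> \<Theta>(\<lambda>n. (ln (real n))\<^sup>2 / real n)" if "s - a = 1/2"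
  proof (rule bigtheta_at_sample_level)
    show "Rstar (\<lambda>j. real j powr (2 * p)) (\<lambda>j. real j powr (-2 * a)) l \<in> \<Theta>[at_right 0](\<lambda>x. x * (- ln x))"
      using assms that by (intro bigthetaI Rstar_poly_poly_critical_bigo Rstar_poly_poly_critical_bigomega) auto
  qed real_asymp
  show "(\<lambda>n::nat. Rstar (\<lambda>j. real j powr (2 * p)) (\<lambda>j. real j powr (-2 * a)) l ((1 + ln (real n)) / real n))
      \<in> \<Theta>(\<lambda>n. ln (real n) / real n)" if "1/2 < s - a"
  proof (rule bigtheta_at_sample_level)
    show "Rstar (\<lambda>j. real j powr (2 * p)) (\<lambda>j. real j powr (-2 * a)) l \<in> \<Theta>[at_right 0](\<lambda>x. x)"
      using assms that by (intro Rstar_poly_poly_smooth_bigtheta) auto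
  qed real_asymp
qed

lemma Rstar_poly_exp_sample_rate:
  assumes "0 < a" "1/2 - p < s"
  shows "(\<lambda>n::nat. Rstar (\<lambda>j. real j powr (2 * p)) (\<lambda>j. exp (- (real j powr (2 * a)) + 1)) l
           ((1 + ln (real n)) / real n)) \<in> \<Theta>(\<lambda>n. ln (real n) powr (- (2 * p + 2 * s - 1) / (2 * a)))"
proof (rule bigtheta_at_sample_level)
  show "Rstar (\<lambda>j. real j powr (2 * p)) (\<lambda>j. exp (- (real j powr (2 * a)) + 1)) l
      \<in> \<Theta>[at_right 0](\<lambda>x. (- ln x) powr (- (2 * p + 2 * s - 1) / (2 * a)))"
    using assms by (intro bigthetaI Rstar_poly_exp_bigo Rstar_poly_exp_bigomega) auto
qed real_asymp

lemma Rstar_exp_poly_sample_rates: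
  assumes "0 < p" "0 < a"
  shows "s - a < 1/2 \<Longrightarrow> (\<lambda>n::nat. Rstar (\<lambda>j. exp (real j powr (2 * p) - 1)) (\<lambda>j. real j powr (-2 * a)) l
           ((1 + ln (real n)) / real n)) \<in> \<Theta>(\<lambda>n. (ln (real n) powr ((2 * p + 2 * a - 2 * s + 1) / (2 * p))) / real n)"
    and "s - a = 1/2 \<Longrightarrow> (\<lambda>n::nat. Rstar (\<lambda>j. exp (real j powr (2 * p) - 1)) (\<lambda>j. real j powr (-2 * a)) l
           ((1 + ln (real n)) / real n)) \<in> \<Theta>(\<lambda>n. ln (real n) * ln (ln (real n)) / real n)"
    and "1/2 < s - a \<Longrightarrow> (\<lambda>n::nat. Rstar (\<lambda>j. exp (real j powr (2 * p) - 1)) (\<lambda>j. real j powr (-2 * a)) l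
           ((1 + ln (real n)) / real n)) \<in> \<Theta>(\<lambda>n. ln (real n) / real n)"
proof -
  show "(\<lambda>n::nat. Rstar (\<lambda>j. exp (real j powr (2 * p) - 1)) (\<lambda>j. real j powr (-2 * a)) l ((1 + ln (real n)) / real n))
      \<in> \<Theta>(\<lambda>n. (ln (real n) powr ((2 * p + 2 * a - 2 * s + 1) / (2 * p))) / real n)" if "s - a < 1/2"
  proof (rule bigtheta_at_sample_level)
    define \<kappa> where "\<kappa> = (2 * a - 2 * s + 1) / (2 * p)"
    show "Rstar (\<lambda>j. exp (real j powr (2 * p) - 1)) (\<lambda>j. real j powr (-2 * a)) l
        \<in> \<Theta>[at_right 0](\<lambda>x. x * (- ln x) powr \<kappa>)"
      unfolding \<kappa>_def using assms that
      by (intro bigthetaI Rstar_exp_poly_regular_bigo Rstar_exp_poly_regular_bigomega) auto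
    have "(2 * p + 2 * a - 2 * s + 1) / (2 * p) = \<kappa> + 1" using assms by (simp add: \<kappa>_def field_simps)
    then show "(\<lambda>n::nat. (1 + ln (real n)) / real n * (- ln ((1 + ln (real n)) / real n)) powr \<kappa>)
        \<in> \<Theta>(\<lambda>n. (ln (real n) powr ((2 * p + 2 * a - 2 * s + 1) / (2 * p))) / real n)"
      by simp real_asymp
  qed
  show "(\<lambda>n::nat. Rstar (\<lambda>j. exp (real j powr (2 * p) - 1)) (\<lambda>j. real j powr (-2 * a)) l ((1 + ln (real n)) / real n))
      \<in> \<Theta>(\<lambda>n. ln (real n) * ln (ln (real n)) / real n)" if "s - a = 1/2"
  proof (rule bigtheta_at_sample_level)
    show "Rstar (\<lambda>j. exp (real j powr (2 * p) - 1)) (\<lambda>j. real j powr (-2 * a)) l \<in> \<Theta>[at_right 0](\<lambda>x. x * ln (- ln x))"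
      using assms that by (intro bigthetaI Rstar_exp_poly_critical_bigo Rstar_exp_poly_critical_bigomega) auto
  qed real_asymp
  show "(\<lambda>n::nat. Rstar (\<lambda>j. exp (real j powr (2 * p) - 1)) (\<lambda>j. real j powr (-2 * a)) l ((1 + ln (real n)) / real n))
      \<in> \<Theta>(\<lambda>n. ln (real n) / real n)" if "1/2 < s - a"
  proof (rule bigtheta_at_sample_level)
    show "Rstar (\<lambda>j. exp (real j powr (2 * p) - 1)) (\<lambda>j. real j powr (-2 * a)) l \<in> \<Theta>[at_right 0](\<lambda>x. x)"
      using assms that by (intro Rstar_exp_poly_smooth_bigtheta) auto
  qed real_asymp
qed

end

theorem proposition3p5:
  fixes l :: "nat \<Rightarrow> real" and s :: real
  assumes hl: "\<forall>j\<ge>1. (l j)\<^sup>2 = real j powr (-2 * s)"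
  shows
  "(\<forall>p a. p > 0 \<longrightarrow> a > 1/2 \<longrightarrow> p + a \<ge> 3/2 \<longrightarrow> s > 1/2 - p \<longrightarrow>
      (let R = (\<lambda>n::nat. Rstar (\<lambda>j. real j powr (2 * p)) (\<lambda>j. real j powr (-2 * a)) l
                            ((1 + ln (real n)) / real n))
       in (s - a < 1/2 \<longrightarrow>
             R \<in> \<Theta>(\<lambda>n. (ln (real n) / real n) powr ((2 * p + 2 * s - 1) / (2 * p + 2 * a))))
        \<and> (s - a = 1/2 \<longrightarrow> R \<in> \<Theta>(\<lambda>n. (ln (real n))\<^sup>2 / real n))
        \<and> (s - a > 1/2 \<longrightarrow> R \<in> \<Theta>(\<lambda>n. ln (real n) / real n))))
   \<and> (\<forall>p a. p > 0 \<longrightarrow> a > 0 \<longrightarrow> s > 1/2 - p \<longrightarrow>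
      (\<lambda>n::nat. Rstar (\<lambda>j. real j powr (2 * p)) (\<lambda>j. exp (- (real j powr (2 * a)) + 1)) l
                     ((1 + ln (real n)) / real n))
        \<in> \<Theta>(\<lambda>n. ln (real n) powr (- (2 * p + 2 * s - 1) / (2 * a))))
   \<and> (\<forall>p a. p > 0 \<longrightarrow> a > 1/2 \<longrightarrow>
      (let R = (\<lambda>n::nat. Rstar (\<lambda>j. exp (real j powr (2 * p) - 1)) (\<lambda>j. real j powr (-2 * a)) l
                            ((1 + ln (real n)) / real n))
       in (s - a < 1/2 \<longrightarrow>
             R \<in> \<Theta>(\<lambda>n. (ln (real n) powr ((2 * p + 2 * a - 2 * s + 1) / (2 * p))) / real n))
        \<and> (s - a = 1/2 \<longrightarrow> R \<in> \<Theta>(\<lambda>n. ln (real n) * ln (ln (real n)) / real n))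
        \<and> (s - a > 1/2 \<longrightarrow> R \<in> \<Theta>(\<lambda>n. ln (real n) / real n))))"
proof -
  interpret power_functional l s using hl by unfold_locales simp
  show ?thesis
    unfolding Let_def
    by (intro conjI allI impI;
        rule Rstar_poly_poly_sample_rates Rstar_poly_exp_sample_rate Rstar_exp_poly_sample_rates; simp)
qed

end
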